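(* Let $\ell = p_1^{d_1}\cdots p_r^{d_r}$ with distinct primes $p_i$ and $d_i \ge 1$, let $A = A_1\times\cdots\times A_r$ with $A_i$ elementary abelian of order $p_i^{d_i}$, so that $\mathrm{Aut}(A) = \mathrm{GL}(d_1,p_1)\times\cdots\times \mathrm{GL}(d_r,p_r)$, and let $U \leq \mathrm{Aut}(A)$. Put $\sigma_i(U) = U \cap \mathrm{GL}(d_i,p_i)$ and $O(U) = O_{p_1}(\sigma_1(U))\times\cdots\times O_{p_r}(\sigma_r(U))$. Then: (a) $O(U)$ is the largest normal subgroup of $U$ that centralizes a series through $A$; (b) $U$ is $F$-relevant if and only if $O(U) = \{1\}$.
   Context: $O_p(X)$ denotes the largest normal $p$-subgroup of a finite group $X$. A subgroup $N \le \mathrm{Aut}(A)$ centralizes a series through $A$ if there is an $N$-invariant series of subgroups $A = A_1' > A_2' > \cdots > A_{l+1}' = \{1\}$ such that $N$ induces the identity on every quotient $A_j'/A_{j+1}'$. A subgroup $U \le \mathrm{Aut}(A)$ is $F$-relevant if no non-trivial normal subgroup of $U$ centralizes a series through $A$. *)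

theory Defs
  imports "HOL-Algebra.Algebra"
begin

definition O_p :: "('a, 'b) monoid_scheme \<Rightarrow> nat \<Rightarrow> 'a set" where
  "O_p Gr p = (THE H. normal H Gr \<and> (\<exists>k. card H = p ^ k) \<and>
                 (\<forall>K. normal K Gr \<and> (\<exists>k. card K = p ^ k) \<longrightarrow> K \<subseteq> H))"

definition centralizes_series :: "('a, 'b) monoid_scheme \<Rightarrow> ('a \<Rightarrow> 'a) set \<Rightarrow> bool" where
  "centralizes_series A H \<longleftrightarrow>
     (\<exists>(l::nat) (S::nat \<Rightarrow> 'a set).
        S 0 = carrier A \<and> S l = {\<one>\<^bsub>A\<^esub>} \<and>
        (\<forall>j\<le>l. subgroup (S j) A) \<and>
        (\<forall>j<l. S (Suc j) \<subset> S j) \<and>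
        (\<forall>n\<in>H. \<forall>j\<le>l. n ` S j \<subseteq> S j) \<and>
        (\<forall>n\<in>H. \<forall>j<l. \<forall>x\<in>S j. n x \<otimes>\<^bsub>A\<^esub> inv\<^bsub>A\<^esub> x \<in> S (Suc j)))"

definition F_relevant :: "('a, 'b) monoid_scheme \<Rightarrow> ('a \<Rightarrow> 'a) set \<Rightarrow> bool" where
  "F_relevant A U \<longleftrightarrow>
     (\<forall>H. normal H ((AutoGroup A)\<lparr>carrier := U\<rparr>) \<and> centralizes_series A H
          \<longrightarrow> H = {\<one>\<^bsub>AutoGroup A\<^esub>})"

text \<open>The factor GL(d_i,p_i) of Aut(A) = GL(d_1,p_1) x ... x GL(d_r,p_r), where
  A is the internal direct product of the A_j (j < r): the automorphisms of A
  acting trivially on every A_j with j \<noteq> i.\<close>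
definition GL_factor :: "('a, 'b) monoid_scheme \<Rightarrow> (nat \<Rightarrow> 'a set) \<Rightarrow> nat \<Rightarrow> nat \<Rightarrow> ('a \<Rightarrow> 'a) set" where
  "GL_factor A Ai r i = {\<phi> \<in> auto A. \<forall>j<r. j \<noteq> i \<longrightarrow> (\<forall>x\<in>Ai j. \<phi> x = x)}"

definition sigma :: "('a, 'b) monoid_scheme \<Rightarrow> (nat \<Rightarrow> 'a set) \<Rightarrow> nat \<Rightarrow> ('a \<Rightarrow> 'a) set \<Rightarrow> nat \<Rightarrow> ('a \<Rightarrow> 'a) set" where
  "sigma A Ai r U i = U \<inter> GL_factor A Ai r i"

text \<open>O(U) = O_{p_1}(sigma_1 U) x ... x O_{p_r}(sigma_r U), as a subgroup of Aut(A)
  (the internal product of these commuting subgroups = the subgroup they generate).\<close>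
definition O_U :: "('a, 'b) monoid_scheme \<Rightarrow> (nat \<Rightarrow> 'a set) \<Rightarrow> (nat \<Rightarrow> nat) \<Rightarrow> nat \<Rightarrow> ('a \<Rightarrow> 'a) set \<Rightarrow> ('a \<Rightarrow> 'a) set" where
  "O_U A Ai p r U = generate (AutoGroup A)
      (\<Union>i<r. O_p ((AutoGroup A)\<lparr>carrier := sigma A Ai r U i\<rparr>) (p i))"

end

theory Submission
  imports Defs "HOL-Number_Theory.Cong"
begin

text \<open>
  Since $\mathrm{GL}(d_i,p_i)$ is normal in $\mathrm{Aut}(A)$, each $\sigma_i(U)$ is normal in $U$,
  and $O_{p_i}(\sigma_i(U))$, being invariant under all automorphisms of $\sigma_i(U)$, is normalized
  by $U$; hence $O(U)$ is normal in $U$. A $p$-group of automorphisms of a finite $p$-group fixes,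
  by counting fixed points modulo $p$, a non-trivial coset of every proper invariant subgroup, so
  its upper central series on $A_i$ exhausts $A_i$; the products of these series over $i$ form a
  series of $A$ centralized by $O(U)$.

  Conversely, if $h$ stabilizes a series of length $l$, then $h^{p_j^l}$ is trivial on $A_j$. By the
  Chinese remainder theorem $h$ is a product of powers $h^{m_i}$, each acting only on $A_i$. When
  $h$ lies in a normal subgroup $H$ of $U$ centralizing a series, these powers lie in the normal
  $p_i$-subgroup $H \cap \mathrm{GL}(d_i,p_i)$ of $\sigma_i(U)$, hence in $O_{p_i}(\sigma_i(U))$.
\<close>

section \<open>Prime-power groups and the largest normal $p$-subgroup\<close>

lemma (in group) subgroup_nat_pow_closed:
  assumes "subgroup H G" "h \<in> H"
  shows "h [^] (n::nat) \<in> H"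
  using subgroup_int_pow_closed[OF assms, of "int n"] by (simp add: int_pow_int)

lemma (in group) inv_mult_cancel_left: "x \<in> carrier G \<Longrightarrow> y \<in> carrier G \<Longrightarrow> inv x \<otimes> (x \<otimes> y) = y"
  by (simp add: m_assoc[symmetric])

lemma (in group) mult_inv_cancel_left: "x \<in> carrier G \<Longrightarrow> y \<in> carrier G \<Longrightarrow> x \<otimes> (inv x \<otimes> y) = y"
  by (simp add: m_assoc[symmetric])

lemma (in group) nat_pow_sum_mem_generate:
  assumes h: "h \<in> carrier G" and W: "\<And>i. i < n \<Longrightarrow> h [^] (m i :: nat) \<in> W"
  shows "h [^] (\<Sum>i<(n::nat). m i) \<in> generate G W"
  using W
proof (induction n)
  case 0
  then show ?case using generate.one by simp
next
  case (Suc n)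
  have "h [^] m n \<in> generate G W" using Suc.prems by (intro generate.incl) simp
  then have "h [^] (\<Sum>i<n. m i) \<otimes> h [^] m n \<in> generate G W"
    using Suc by (intro generate.eng) simp_all
  then show ?case using nat_pow_mult[OF h] by simp
qed

lemma (in group) eq_one_if_coprime_exponents:
  assumes x: "x \<in> carrier G" and "x [^] (a::nat) = \<one>" "x [^] (b::nat) = \<one>" "coprime a b"
  shows "x = \<one>"
proof -
  have "ord x dvd a" "ord x dvd b" using assms pow_eq_id by blast+
  with \<open>coprime a b\<close> have "ord x dvd 1" by (meson coprime_common_divisor)
  then have "x [^] (1::nat) = \<one>" using pow_eq_id x by blast
  then show ?thesis using x by simp
qed

text \<open>A prime $q \neq p$ dividing the order would give (via Sylow) a non-trivial element
  killed both by $q$ and by a power of $p$.\<close>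
lemma (in group) prime_power_order_if_prime_power_exponents:
  assumes fin: "finite (carrier G)" and p: "Factorial_Ring.prime (p::nat)"
    and exps: "\<And>x. x \<in> carrier G \<Longrightarrow> \<exists>e. x [^] (p ^ e) = \<one>"
  shows "\<exists>k. order G = p ^ k"
proof -
  have "order G \<noteq> 0" using fin order_gt_0_iff_finite by simp
  moreover have "\<not> is_unit p" using p not_prime_unit by blast
  ultimately obtain m where om: "order G = p ^ multiplicity p (order G) * m" and "\<not> p dvd m"
    using multiplicity_decompose' by blast
  show ?thesis
  proof (cases "m = 1")
    case True
    then show ?thesis using om by auto
  next
    case False
    then obtain q where q: "Factorial_Ring.prime (q::nat)" "q dvd m" using prime_factor_nat by blast
    with \<open>\<not> p dvd m\<close> have "q \<noteq> p" by auto
    have "q dvd p ^ multiplicity p (order G) * m" using q(2) by (rule dvd_mult)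
    then have "q dvd order G" using om by simp
    then obtain m' where "order G = q ^ 1 * m'" by auto
    then obtain Q where "subgroup Q G" "card Q = q ^ 1"
      using sylow_thm[OF q(1) is_group _ fin] by blast
    then have Q: "subgroup Q G" "card Q = q" by simp_all
    have "\<not> Q \<subseteq> {\<one>}"
    proof
      assume "Q \<subseteq> {\<one>}"
      then have "card Q \<le> 1" using card_mono[of "{\<one>}" Q] by simp
      with Q(2) prime_ge_2_nat[OF q(1)] show False by simp
    qed
    then obtain y where y: "y \<in> Q" "y \<noteq> \<one>" by blast
    have yG: "y \<in> carrier G" using Q(1) y(1) subgroup.subset by blast
    have "finite Q" using Q(2) prime_gt_0_nat[OF q(1)] card_ge_0_finite by auto
    then have "y [^]\<^bsub>G\<lparr>carrier := Q\<rparr>\<^esub> order (G\<lparr>carrier := Q\<rparr>) = \<one>\<^bsub>G\<lparr>carrier := Q\<rparr>\<^esub>"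
      using group.pow_order_eq_1[OF subgroup_imp_group[OF Q(1)]] y(1) by simp
    then have "y [^] q = \<one>" using Q nat_pow_consistent by (simp add: order_def)
    moreover obtain e where "y [^] (p ^ e) = \<one>" using exps yG by blast
    moreover have "coprime q (p ^ e)" using q(1) p \<open>q \<noteq> p\<close> by (simp add: primes_coprime)
    ultimately have "y = \<one>" using eq_one_if_coprime_exponents yG by blast
    with y show ?thesis by blast
  qed
qed

lemma (in group) second_isomorphism_grp_if_normal:
  "H \<lhd> G \<Longrightarrow> K \<lhd> G \<Longrightarrow> second_isomorphism_grp H G K"
  by (rule second_isomorphism_grp.intro[OF _ second_isomorphism_grp_axioms.intro[OF normal_imp_subgroup]])

lemma (in group) prime_power_card_set_mult:
  assumes p: "Factorial_Ring.prime (p::nat)" and H: "H \<lhd> G" and K: "K \<lhd> G"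
    and cH: "card H = p ^ a" and cK: "card K = p ^ b"
  shows "\<exists>c. card (H <#> K) = p ^ c"
proof -
  have si: "second_isomorphism_grp H G K" using second_isomorphism_grp_if_normal[OF H K] .
  have iso: "G\<lparr>carrier := K\<rparr> Mod H \<inter> K \<cong> G\<lparr>carrier := H <#> K\<rparr> Mod H"
    using second_isomorphism_grp.normal_intersection_quotient_isom[OF si] by (rule is_isoI)
  have sK: "subgroup K G" and sH: "subgroup H G" using H K normal_imp_subgroup by blast+
  have sHK: "subgroup (H <#> K) G"
    using normal_imp_subgroup[OF normal_subgroup_set_mult_closed[OF H K]] .
  interpret GK: group "G\<lparr>carrier := K\<rparr>" using subgroup_imp_group[OF sK] .
  interpret GHK: group "G\<lparr>carrier := H <#> K\<rparr>" using subgroup_imp_group[OF sHK] .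
  have l1: "card (rcosets\<^bsub>G\<lparr>carrier := K\<rparr>\<^esub> (H \<inter> K)) * card (H \<inter> K) = card K"
    using GK.lagrange[OF subgroup_incl[OF subgroups_Inter_pair[OF sH sK] sK Int_lower2]]
    by (simp add: order_def)
  have l2: "card (rcosets\<^bsub>G\<lparr>carrier := H <#> K\<rparr>\<^esub> H) * card H = card (H <#> K)"
    using GHK.lagrange[OF subgroup_incl[OF sH sHK second_isomorphism_grp.H_contained_in_set_mult[OF si]]]
    by (simp add: order_def)
  have eq: "card (rcosets\<^bsub>G\<lparr>carrier := K\<rparr>\<^esub> (H \<inter> K)) = card (rcosets\<^bsub>G\<lparr>carrier := H <#> K\<rparr>\<^esub> H)"
    using iso_same_card[OF iso] by (simp add: FactGroup_def)
  have "card (rcosets\<^bsub>G\<lparr>carrier := K\<rparr>\<^esub> (H \<inter> K)) dvd p ^ b"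
    using l1 cK by (metis dvd_triv_left)
  then obtain j where "card (rcosets\<^bsub>G\<lparr>carrier := K\<rparr>\<^esub> (H \<inter> K)) = p ^ j"
    using divides_primepow_nat[OF p] by blast
  then have "card (H <#> K) = p ^ (j + a)" using l2 eq cH by (simp add: power_add)
  then show ?thesis by blast
qed

lemma (in group) ex_greatest_normal_prime_power_subgroup:
  assumes fin: "finite (carrier G)" and p: "Factorial_Ring.prime (p::nat)"
  shows "\<exists>H. H \<lhd> G \<and> (\<exists>k. card H = p ^ k) \<and> (\<forall>K. K \<lhd> G \<and> (\<exists>k. card K = p ^ k) \<longrightarrow> K \<subseteq> H)"
proof -
  define N where "N = {K. K \<lhd> G \<and> (\<exists>k. card K = p ^ k)}"
  have "N \<subseteq> Pow (carrier G)"
    unfolding N_def using normal_imp_subgroup subgroup.subset by blast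
  then have finN: "finite N" using fin by (simp add: finite_subset)
  have "card {\<one>} = p ^ 0" by simp
  then have "{\<one>} \<in> N" unfolding N_def using one_is_normal by blast
  then have "Max (card ` N) \<in> card ` N" using finN by (intro Max_in finite_imageI) blast+
  then obtain H where H: "H \<in> N" and HM: "card H = Max (card ` N)" by (rule imageE) simp
  have Hmax: "card K \<le> card H" if "K \<in> N" for K
    using Max_ge[OF finite_imageI[OF finN] imageI[OF that]] HM by simp
  have "K \<subseteq> H" if K: "K \<in> N" for K
  proof -
    have HN: "H \<lhd> G" and KN: "K \<lhd> G" using H K unfolding N_def by auto
    obtain a b where "card H = p ^ a" "card K = p ^ b" using H K unfolding N_def by auto
    then obtain c where "card (H <#> K) = p ^ c"
      using prime_power_card_set_mult[OF p HN KN] by blast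
    then have "H <#> K \<in> N" unfolding N_def using normal_subgroup_set_mult_closed[OF HN KN] by blast
    then have le: "card (H <#> K) \<le> card H" by (rule Hmax)
    have si: "second_isomorphism_grp H G K" using second_isomorphism_grp_if_normal[OF HN KN] .
    have HHK: "H \<subseteq> H <#> K" using second_isomorphism_grp.H_contained_in_set_mult[OF si] .
    have "finite (H <#> K)"
      using normal_imp_subgroup[OF normal_subgroup_set_mult_closed[OF HN KN]] subgroup.subset fin
        finite_subset by blast
    then have "H = H <#> K" using card_subset_eq[OF _ HHK] card_mono[OF _ HHK] le by simp
    then show "K \<subseteq> H" using second_isomorphism_grp.S_contained_in_set_mult[OF si] by simp
  qed
  then show ?thesis using H unfolding N_def by blast
qed

lemma (in group) O_p_spec:
  assumes "finite (carrier G)" "Factorial_Ring.prime (p::nat)"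
  shows "O_p G p \<lhd> G \<and> (\<exists>k. card (O_p G p) = p ^ k)
           \<and> (\<forall>K. K \<lhd> G \<and> (\<exists>k. card K = p ^ k) \<longrightarrow> K \<subseteq> O_p G p)"
proof -
  obtain H where H: "H \<lhd> G \<and> (\<exists>k. card H = p ^ k) \<and> (\<forall>K. K \<lhd> G \<and> (\<exists>k. card K = p ^ k) \<longrightarrow> K \<subseteq> H)"
    using ex_greatest_normal_prime_power_subgroup[OF assms] by blast
  then have "\<exists>!H. H \<lhd> G \<and> (\<exists>k. card H = p ^ k) \<and> (\<forall>K. K \<lhd> G \<and> (\<exists>k. card K = p ^ k) \<longrightarrow> K \<subseteq> H)"
    by (intro ex1I[of _ H]) (blast intro: subset_antisym)+
  then show ?thesis unfolding O_p_def by (rule theI')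
qed

lemma (in group) O_p_normal: "finite (carrier G) \<Longrightarrow> Factorial_Ring.prime p \<Longrightarrow> O_p G p \<lhd> G"
  using O_p_spec by blast

lemma (in group) O_p_prime_power_card:
  "finite (carrier G) \<Longrightarrow> Factorial_Ring.prime p \<Longrightarrow> \<exists>k. card (O_p G p) = p ^ k"
  using O_p_spec by blast

lemma (in group) O_p_greatest:
  "finite (carrier G) \<Longrightarrow> Factorial_Ring.prime p \<Longrightarrow> K \<lhd> G \<Longrightarrow> card K = p ^ k \<Longrightarrow> K \<subseteq> O_p G p"
  using O_p_spec by blast

lemma (in group) O_p_iso_image:
  assumes fin: "finite (carrier G)" and p: "Factorial_Ring.prime p" and \<phi>: "\<phi> \<in> iso G G"
  shows "\<phi> ` O_p G p \<subseteq> O_p G p"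
proof -
  have N: "O_p G p \<lhd> G" using O_p_normal[OF fin p] .
  obtain k where k: "card (O_p G p) = p ^ k" using O_p_prime_power_card[OF fin p] by blast
  have "inj_on \<phi> (carrier G)" using \<phi> by (simp add: iso_def bij_betw_def)
  moreover have "O_p G p \<subseteq> carrier G" using normal_imp_subgroup[OF N] subgroup.subset by blast
  ultimately have "card (\<phi> ` O_p G p) = p ^ k" using k card_image inj_on_subset by metis
  moreover have "\<phi> ` O_p G p \<lhd> G" using iso_normal_subgroup[OF \<phi> is_group is_group N] .
  ultimately show ?thesis using O_p_greatest[OF fin p] by blast
qed

lemma (in group) conjugation_iso_subgroup:
  assumes S: "subgroup S G" and u: "u \<in> carrier G"
    and conj: "\<And>s. s \<in> S \<Longrightarrow> u \<otimes> s \<otimes> inv u \<in> S" "\<And>s. s \<in> S \<Longrightarrow> inv u \<otimes> s \<otimes> u \<in> S"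
  shows "(\<lambda>x. u \<otimes> x \<otimes> inv u) \<in> iso (G\<lparr>carrier := S\<rparr>) (G\<lparr>carrier := S\<rparr>)"
proof -
  have SG: "S \<subseteq> carrier G" using S subgroup.subset by blast
  have "u \<otimes> (x \<otimes> y) \<otimes> inv u = (u \<otimes> x \<otimes> inv u) \<otimes> (u \<otimes> y \<otimes> inv u)"
    if "x \<in> S" "y \<in> S" for x y
    using that SG u by (simp add: m_assoc inv_mult_cancel_left mult_inv_cancel_left subsetD)
  then have "(\<lambda>x. u \<otimes> x \<otimes> inv u) \<in> hom (G\<lparr>carrier := S\<rparr>) (G\<lparr>carrier := S\<rparr>)"
    using conj(1) by (intro homI) auto
  moreover have "bij_betw (\<lambda>x. u \<otimes> x \<otimes> inv u) S S"
  proof (rule bij_betw_imageI)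
    show "inj_on (\<lambda>x. u \<otimes> x \<otimes> inv u) S"
      by (rule inj_onI) (meson SG u conjugation_is_inj subsetD)
    show "(\<lambda>x. u \<otimes> x \<otimes> inv u) ` S = S"
    proof
      show "(\<lambda>x. u \<otimes> x \<otimes> inv u) ` S \<subseteq> S" using conj(1) by blast
      show "S \<subseteq> (\<lambda>x. u \<otimes> x \<otimes> inv u) ` S"
      proof
        fix s assume "s \<in> S"
        then have "s = u \<otimes> (inv u \<otimes> s \<otimes> u) \<otimes> inv u"
          using SG u by (simp add: m_assoc inv_mult_cancel_left mult_inv_cancel_left subsetD)
        then show "s \<in> (\<lambda>x. u \<otimes> x \<otimes> inv u) ` S" using conj(2) \<open>s \<in> S\<close> by blast
      qed
    qed
  qed
  ultimately show ?thesis by (simp add: iso_def)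
qed

lemma (in group) O_p_conj_closed:
  assumes S: "subgroup S G" "finite S" and p: "Factorial_Ring.prime p" and u: "u \<in> carrier G"
    and conj: "\<And>s. s \<in> S \<Longrightarrow> u \<otimes> s \<otimes> inv u \<in> S" "\<And>s. s \<in> S \<Longrightarrow> inv u \<otimes> s \<otimes> u \<in> S"
    and g: "g \<in> O_p (G\<lparr>carrier := S\<rparr>) p"
  shows "u \<otimes> g \<otimes> inv u \<in> O_p (G\<lparr>carrier := S\<rparr>) p"
  using group.O_p_iso_image[OF subgroup_imp_group[OF S(1)] _ p conjugation_iso_subgroup[OF S(1) u conj]]
    S(2) g by auto

lemma (in group_action) singleton_orbits_eq_fixed_points:
  "{Q\<in>orbits G E \<phi>. card Q = 1} = (\<lambda>x. {x}) ` {x\<in>E. \<forall>g\<in>carrier G. \<phi> g x = x}"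
proof (intro equalityI subsetI)
  fix Q assume Q: "Q \<in> {Q\<in>orbits G E \<phi>. card Q = 1}"
  then obtain x where x: "x \<in> E" "Q = orbit G \<phi> x" unfolding orbits_def by blast
  have "x \<in> Q" using orbit_refl x by simp
  moreover have "card Q = 1" using Q by blast
  ultimately have Qx: "Q = {x}" by (metis card_1_singletonE singletonD)
  have "\<forall>g\<in>carrier G. \<phi> g x = x"
  proof
    fix g assume "g \<in> carrier G"
    then have "\<phi> g x \<in> Q" using x unfolding orbit_def by blast
    then show "\<phi> g x = x" using Qx by simp
  qed
  then show "Q \<in> (\<lambda>x. {x}) ` {x\<in>E. \<forall>g\<in>carrier G. \<phi> g x = x}" using x Qx by blast
next
  fix Q assume "Q \<in> (\<lambda>x. {x}) ` {x\<in>E. \<forall>g\<in>carrier G. \<phi> g x = x}"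
  then obtain x where x: "x \<in> E" "\<forall>g\<in>carrier G. \<phi> g x = x" "Q = {x}" by blast
  then have "orbit G \<phi> x = {x}" using orbit_refl unfolding orbit_def by auto
  then show "Q \<in> {Q\<in>orbits G E \<phi>. card Q = 1}" using x unfolding orbits_def by auto
qed

text \<open>Orbits of a $p$-group have $p$-power size, so only the fixed points count modulo $p$.\<close>
lemma (in group_action) card_cong_card_fixed_points:
  assumes fin: "finite E" and p: "Factorial_Ring.prime p" and oG: "order G = p ^ n"
  shows "[card E = card {x\<in>E. \<forall>g\<in>carrier G. \<phi> g x = x}] (mod p)"
proof -
  let ?F = "{x\<in>E. \<forall>g\<in>carrier G. \<phi> g x = x}"
  let ?Os = "orbits G E \<phi>"
  have finO: "finite ?Os" using fin unfolding orbits_def by simp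
  have orbit_card: "[card Q = (if card Q = 1 then 1 else 0)] (mod p)" if Q: "Q \<in> ?Os" for Q
  proof -
    obtain x where x: "x \<in> E" "Q = orbit G \<phi> x" using Q unfolding orbits_def by blast
    then have "card Q * card (stabilizer G \<phi> x) = p ^ n"
      using orbit_stabilizer_theorem[OF x(1)] oG by simp
    then have "card Q dvd p ^ n" by (metis dvd_triv_left)
    then obtain i where i: "card Q = p ^ i" using divides_primepow_nat[OF p] by blast
    show ?thesis
    proof (cases i)
      case 0
      then show ?thesis using i by simp
    next
      case (Suc i')
      then have "p dvd card Q" using i by simp
      moreover have "card Q \<noteq> 1" using i Suc p
        by (metis One_nat_def nat_power_eq_Suc_0_iff not_prime_1 old.nat.distinct(1))
      ultimately show ?thesis by (simp add: cong_0_iff)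
    qed
  qed
  have "card E = (\<Sum>Q\<in>?Os. card Q)" using disjoint_sum[OF fin, of "\<lambda>_. (1::nat)"] by simp
  also have "[\<dots> = (\<Sum>Q\<in>?Os. if card Q = 1 then 1 else 0)] (mod p)"
    using orbit_card by (rule cong_sum)
  also have "(\<Sum>Q\<in>?Os. if card Q = 1 then 1 else (0::nat)) = card {Q\<in>?Os. card Q = 1}"
    using finO by (simp add: sum.If_cases Int_def)
  also have "\<dots> = card ?F"
    unfolding singleton_orbits_eq_fixed_points by (rule card_image) (simp add: inj_on_def)
  finally show ?thesis .
qed

section \<open>Automorphisms\<close>

context group
begin

lemma auto_group_hom: "g \<in> auto G \<Longrightarrow> group_hom G G g"
  using is_group by (simp add: auto_def group_hom_def group_hom_axioms_def)

lemma auto_closed: "g \<in> auto G \<Longrightarrow> x \<in> carrier G \<Longrightarrow> g x \<in> carrier G"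
  by (rule group_hom.hom_closed[OF auto_group_hom])

lemma auto_mult: "g \<in> auto G \<Longrightarrow> x \<in> carrier G \<Longrightarrow> y \<in> carrier G \<Longrightarrow> g (x \<otimes> y) = g x \<otimes> g y"
  by (rule group_hom.hom_mult[OF auto_group_hom])

lemma auto_inv: "g \<in> auto G \<Longrightarrow> x \<in> carrier G \<Longrightarrow> g (inv x) = inv (g x)"
  by (rule group_hom.hom_inv[OF auto_group_hom])

lemma auto_one: "g \<in> auto G \<Longrightarrow> g \<one> = \<one>"
  by (rule group_hom.hom_one[OF auto_group_hom])

lemma auto_nat_pow: "g \<in> auto G \<Longrightarrow> x \<in> carrier G \<Longrightarrow> g (x [^] (n::nat)) = g x [^] n"
  by (rule group_hom.hom_nat_pow[OF auto_group_hom])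

lemma auto_inj_on: "g \<in> auto G \<Longrightarrow> inj_on g (carrier G)"
  by (simp add: auto_def Bij_def bij_betw_def)

lemma auto_eqI:
  assumes "g \<in> auto G" "h \<in> auto G" "\<And>x. x \<in> carrier G \<Longrightarrow> g x = h x"
  shows "g = h"
proof (rule extensionalityI)
  show "g \<in> extensional (carrier G)" "h \<in> extensional (carrier G)"
    using assms(1,2) by (simp_all add: auto_def Bij_def)
qed (rule assms(3))

lemma finite_auto: "finite (carrier G) \<Longrightarrow> finite (auto G)"
proof -
  assume "finite (carrier G)"
  moreover have "auto G \<subseteq> carrier G \<rightarrow>\<^sub>E carrier G"
    using auto_closed by (auto simp: auto_def Bij_def PiE_def Pi_def)
  ultimately show ?thesis by (simp add: finite_subset finite_PiE)
qed

lemma carrier_AutoGroup: "carrier (AutoGroup G) = auto G"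
  by (simp add: AutoGroup_def BijGroup_def)

lemma one_AutoGroup: "\<one>\<^bsub>AutoGroup G\<^esub> = (\<lambda>x\<in>carrier G. x)"
  by (simp add: AutoGroup_def BijGroup_def)

lemma AutoGroup_mult_apply:
  "g \<in> auto G \<Longrightarrow> h \<in> auto G \<Longrightarrow> x \<in> carrier G \<Longrightarrow> (g \<otimes>\<^bsub>AutoGroup G\<^esub> h) x = g (h x)"
  by (simp add: AutoGroup_def BijGroup_def compose_def auto_def)

lemma AutoGroup_inv_closed: "g \<in> auto G \<Longrightarrow> inv\<^bsub>AutoGroup G\<^esub> g \<in> auto G"
  using group.inv_closed[OF AutoGroup] carrier_AutoGroup by blast

lemma AutoGroup_inv_apply:
  assumes g: "g \<in> auto G" and x: "x \<in> carrier G"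
  shows "(inv\<^bsub>AutoGroup G\<^esub> g) (g x) = x" "g ((inv\<^bsub>AutoGroup G\<^esub> g) x) = x"
proof -
  have "(inv\<^bsub>AutoGroup G\<^esub> g \<otimes>\<^bsub>AutoGroup G\<^esub> g) x = x" "(g \<otimes>\<^bsub>AutoGroup G\<^esub> inv\<^bsub>AutoGroup G\<^esub> g) x = x"
    using group.l_inv[OF AutoGroup] group.r_inv[OF AutoGroup] g x
    by (simp_all add: carrier_AutoGroup one_AutoGroup)
  then show "(inv\<^bsub>AutoGroup G\<^esub> g) (g x) = x" "g ((inv\<^bsub>AutoGroup G\<^esub> g) x) = x"
    using AutoGroup_mult_apply[OF g AutoGroup_inv_closed[OF g] x]
      AutoGroup_mult_apply[OF AutoGroup_inv_closed[OF g] g x] by simp_all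
qed

lemma AutoGroup_nat_pow_closed: "g \<in> auto G \<Longrightarrow> g [^]\<^bsub>AutoGroup G\<^esub> (n::nat) \<in> auto G"
  using monoid.nat_pow_closed[OF group.is_monoid[OF AutoGroup]] carrier_AutoGroup by blast

lemma AutoGroup_nat_pow_Suc_apply:
  assumes g: "g \<in> auto G" and x: "x \<in> carrier G"
  shows "(g [^]\<^bsub>AutoGroup G\<^esub> Suc n) x = g ((g [^]\<^bsub>AutoGroup G\<^esub> n) x)"
proof -
  have "g [^]\<^bsub>AutoGroup G\<^esub> Suc n = g \<otimes>\<^bsub>AutoGroup G\<^esub> g [^]\<^bsub>AutoGroup G\<^esub> n"
    using monoid.nat_pow_Suc2[OF group.is_monoid[OF AutoGroup]] g carrier_AutoGroup by blast
  then show ?thesis using AutoGroup_mult_apply[OF g AutoGroup_nat_pow_closed[OF g] x] by simp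
qed

lemma AutoGroup_nat_pow_apply_fixed:
  assumes "g \<in> auto G" "x \<in> carrier G" "g x = x"
  shows "(g [^]\<^bsub>AutoGroup G\<^esub> (n::nat)) x = x"
proof (induction n)
  case 0
  then show ?case using assms(2) by (simp add: one_AutoGroup)
next
  case (Suc n)
  then show ?case using AutoGroup_nat_pow_Suc_apply[OF assms(1,2), of n] assms(3) by simp
qed

lemma AutoGroup_nat_pow_apply_cong:
  assumes g: "g \<in> auto G" and x: "x \<in> carrier G" and fixed: "(g [^]\<^bsub>AutoGroup G\<^esub> (q::nat)) x = x"
    and ab: "[a = b] (mod q)"
  shows "(g [^]\<^bsub>AutoGroup G\<^esub> a) x = (g [^]\<^bsub>AutoGroup G\<^esub> b) x"
proof -
  interpret Aut: group "AutoGroup G" by (rule AutoGroup)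
  have g': "g \<in> carrier (AutoGroup G)" using g carrier_AutoGroup by simp
  have mod: "(g [^]\<^bsub>AutoGroup G\<^esub> c) x = (g [^]\<^bsub>AutoGroup G\<^esub> (c mod q)) x" for c :: nat
  proof -
    have "g [^]\<^bsub>AutoGroup G\<^esub> c
        = g [^]\<^bsub>AutoGroup G\<^esub> (c mod q) \<otimes>\<^bsub>AutoGroup G\<^esub> (g [^]\<^bsub>AutoGroup G\<^esub> q) [^]\<^bsub>AutoGroup G\<^esub> (c div q)"
      using Aut.nat_pow_mult[OF g'] Aut.nat_pow_pow[OF g'] by (metis mod_div_mult_eq mult.commute)
    moreover have "((g [^]\<^bsub>AutoGroup G\<^esub> q) [^]\<^bsub>AutoGroup G\<^esub> (c div q)) x = x"
      using AutoGroup_nat_pow_apply_fixed[OF AutoGroup_nat_pow_closed[OF g] x fixed] .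
    ultimately show ?thesis
      using AutoGroup_mult_apply[OF AutoGroup_nat_pow_closed[OF g]
          AutoGroup_nat_pow_closed[OF AutoGroup_nat_pow_closed[OF g]] x] by simp
  qed
  show ?thesis using mod[of a] mod[of b] ab by (simp add: cong_def)
qed

lemma generate_normal_if_conj_closed:
  assumes U: "subgroup U G" and WU: "W \<subseteq> U"
    and conj: "\<And>u x. u \<in> U \<Longrightarrow> x \<in> W \<Longrightarrow> u \<otimes> x \<otimes> inv u \<in> W"
  shows "generate G W \<lhd> G\<lparr>carrier := U\<rparr>"
proof -
  have UG: "U \<subseteq> carrier G" using U subgroup.subset by blast
  then have WG: "W \<subseteq> carrier G" using WU by blast
  have conj_gen: "u \<otimes> h \<otimes> inv u \<in> generate G W" if u: "u \<in> U" and h: "h \<in> generate G W" for u h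
    using h
  proof (induction rule: generate.induct)
    case one
    have "u \<in> carrier G" using u UG by blast
    then show ?case by (simp add: generate.one)
  next
    case (incl h)
    show ?case using conj[OF u incl] by (rule generate.incl)
  next
    case (inv h)
    have "u \<in> carrier G" "h \<in> carrier G" using u inv UG WG by blast+
    then have "inv (u \<otimes> h \<otimes> inv u) = u \<otimes> inv h \<otimes> inv u" by (simp add: inv_mult_group m_assoc)
    moreover have "inv (u \<otimes> h \<otimes> inv u) \<in> generate G W" using conj[OF u inv] by (rule generate.inv)
    ultimately show ?case by simp
  next
    case (eng h1 h2)
    have "u \<in> carrier G" "h1 \<in> carrier G" "h2 \<in> carrier G"
      using u UG eng.hyps generate_in_carrier[OF WG] by blast+
    then have "u \<otimes> (h1 \<otimes> h2) \<otimes> inv u = (u \<otimes> h1 \<otimes> inv u) \<otimes> (u \<otimes> h2 \<otimes> inv u)"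
      by (simp add: m_assoc inv_mult_cancel_left)
    then show ?case using generate.eng[OF eng.IH] by simp
  qed
  have "\<forall>u\<in>carrier (G\<lparr>carrier := U\<rparr>). \<forall>h\<in>generate G W.
          u \<otimes>\<^bsub>G\<lparr>carrier := U\<rparr>\<^esub> h \<otimes>\<^bsub>G\<lparr>carrier := U\<rparr>\<^esub> inv\<^bsub>G\<lparr>carrier := U\<rparr>\<^esub> u \<in> generate G W"
    using conj_gen m_inv_consistent[OF U] by simp
  moreover have "subgroup (generate G W) (G\<lparr>carrier := U\<rparr>)"
    using subgroup_incl[OF generate_is_subgroup[OF WG] U generate_subgroup_incl[OF WU U]] .
  ultimately show ?thesis using group.normal_inv_iff[OF subgroup_imp_group[OF U]] by blast
qed

lemma auto_image_r_coset:
  assumes g: "g \<in> auto G" and C: "C \<subseteq> carrier G" and a: "a \<in> carrier G"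
  shows "g ` (C #> a) = g ` C #> g a"
proof -
  have "g ` (C #> a) = (\<lambda>c. g (c \<otimes> a)) ` C" unfolding r_coset_def by auto
  also have "\<dots> = (\<lambda>c. g c \<otimes> g a) ` C"
    using C a by (intro image_cong) (auto simp: auto_mult[OF g] subsetD)
  also have "\<dots> = g ` C #> g a" unfolding r_coset_def by auto
  finally show ?thesis .
qed

end

context comm_group
begin

lemma hom_finprod:
  assumes \<phi>: "\<phi> \<in> hom G G" and f: "f \<in> I \<rightarrow> carrier G"
  shows "\<phi> (finprod G f I) = finprod G (\<lambda>i. \<phi> (f i)) I"
proof -
  interpret h: group_hom G G \<phi> by unfold_locales (rule \<phi>)
  show ?thesis
  proof (cases "finite I")
    case True
    then show ?thesis using f
    proof (induction I rule: finite_induct)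
      case (insert a I)
      then have "f a \<in> carrier G" "f \<in> I \<rightarrow> carrier G" "(\<lambda>i. \<phi> (f i)) \<in> I \<rightarrow> carrier G"
        using h.hom_closed by (auto simp: Pi_def)
      with insert show ?case by simp
    qed simp
  qed simp
qed

lemma inv_hom: "(\<lambda>x. inv x) \<in> hom G G"
  by (rule homI) (auto simp: inv_mult)

lemma auto_apply_finprod:
  assumes g: "g \<in> auto G" and f: "f \<in> I \<rightarrow> carrier G"
  shows "g (finprod G f I) = finprod G (\<lambda>i\<in>I. g (f i)) I"
proof -
  have "g \<in> hom G G" using g by (simp add: auto_def)
  then have "g (finprod G f I) = finprod G (\<lambda>i. g (f i)) I" using hom_finprod f by blast
  also have "\<dots> = finprod G (\<lambda>i\<in>I. g (f i)) I"
    by (rule finprod_cong') (use f auto_closed[OF g] in auto)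
  finally show ?thesis .
qed

lemma subgroup_finprod_PiE:
  assumes S: "\<And>i. i \<in> I \<Longrightarrow> subgroup (S i) G"
  shows "subgroup ((\<lambda>f. finprod G f I) ` (\<Pi>\<^sub>E i\<in>I. S i)) G"
proof -
  have fG: "f \<in> I \<rightarrow> carrier G" if "f \<in> (\<Pi>\<^sub>E i\<in>I. S i)" for f
    using that S subgroup.subset by fastforce
  have restrict_eq: "finprod G (\<lambda>i\<in>I. h i) I = finprod G h I" if "h \<in> I \<rightarrow> carrier G" for h
    using that by (intro finprod_cong') auto
  show ?thesis
  proof (rule subgroupI)
    show "(\<lambda>f. finprod G f I) ` (\<Pi>\<^sub>E i\<in>I. S i) \<subseteq> carrier G" using fG by auto
    have "(\<lambda>i\<in>I. \<one>) \<in> (\<Pi>\<^sub>E i\<in>I. S i)" using S subgroup.one_closed by fastforce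
    then show "(\<lambda>f. finprod G f I) ` (\<Pi>\<^sub>E i\<in>I. S i) \<noteq> {}" by blast
  next
    fix x assume "x \<in> (\<lambda>f. finprod G f I) ` (\<Pi>\<^sub>E i\<in>I. S i)"
    then obtain f where f: "f \<in> (\<Pi>\<^sub>E i\<in>I. S i)" "x = finprod G f I" by blast
    have "(\<lambda>i. inv (f i)) \<in> I \<rightarrow> carrier G" using fG[OF f(1)] by auto
    then have "inv x = finprod G (\<lambda>i\<in>I. inv (f i)) I"
      using hom_finprod[OF inv_hom fG[OF f(1)]] f(2) restrict_eq by simp
    moreover have "(\<lambda>i\<in>I. inv (f i)) \<in> (\<Pi>\<^sub>E i\<in>I. S i)"
      using f(1) S subgroup.m_inv_closed by fastforce
    ultimately show "inv x \<in> (\<lambda>f. finprod G f I) ` (\<Pi>\<^sub>E i\<in>I. S i)" by blast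
  next
    fix x y assume "x \<in> (\<lambda>f. finprod G f I) ` (\<Pi>\<^sub>E i\<in>I. S i)" "y \<in> (\<lambda>f. finprod G f I) ` (\<Pi>\<^sub>E i\<in>I. S i)"
    then obtain f g where f: "f \<in> (\<Pi>\<^sub>E i\<in>I. S i)" "x = finprod G f I"
      and g: "g \<in> (\<Pi>\<^sub>E i\<in>I. S i)" "y = finprod G g I" by blast
    have "(\<lambda>i. f i \<otimes> g i) \<in> I \<rightarrow> carrier G" using fG[OF f(1)] fG[OF g(1)] by auto
    then have "x \<otimes> y = finprod G (\<lambda>i\<in>I. f i \<otimes> g i) I"
      using finprod_multf[OF fG[OF f(1)] fG[OF g(1)]] f(2) g(2) restrict_eq by simp
    moreover have "(\<lambda>i\<in>I. f i \<otimes> g i) \<in> (\<Pi>\<^sub>E i\<in>I. S i)"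
      using f(1) g(1) S subgroup.m_closed by fastforce
    ultimately show "x \<otimes> y \<in> (\<lambda>f. finprod G f I) ` (\<Pi>\<^sub>E i\<in>I. S i)" by blast
  qed
qed

lemma AutoGroup_nat_pow_apply_translation:
  assumes f: "f \<in> auto G" and x: "x \<in> carrier G" and z: "z \<in> carrier G" "f z = z"
    and fx: "f x = z \<otimes> x"
  shows "(f [^]\<^bsub>AutoGroup G\<^esub> (n::nat)) x = x \<otimes> z [^] n"
proof (induction n)
  case 0
  then show ?case using x by (simp add: one_AutoGroup)
next
  case (Suc n)
  have "(f [^]\<^bsub>AutoGroup G\<^esub> Suc n) x = f (x \<otimes> z [^] n)"
    using AutoGroup_nat_pow_Suc_apply[OF f x] Suc.IH by simp
  also have "\<dots> = z \<otimes> x \<otimes> z [^] n"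
    using auto_mult[OF f x] auto_nat_pow[OF f z(1)] z fx by simp
  also have "\<dots> = x \<otimes> z [^] Suc n"
    using x z(1) by (simp add: m_ac nat_pow_Suc2)
  finally show ?case .
qed

end

section \<open>Series centralized by a group of automorphisms\<close>

definition is_series :: "('a, 'b) monoid_scheme \<Rightarrow> nat \<Rightarrow> (nat \<Rightarrow> 'a set) \<Rightarrow> bool" where
  "is_series A l S \<longleftrightarrow> S 0 = carrier A \<and> S l = {\<one>\<^bsub>A\<^esub>} \<and>
     (\<forall>j\<le>l. subgroup (S j) A) \<and> (\<forall>j<l. S (Suc j) \<subseteq> S j)"

definition series_stabilizer :: "('a, 'b) monoid_scheme \<Rightarrow> nat \<Rightarrow> (nat \<Rightarrow> 'a set) \<Rightarrow> ('a \<Rightarrow> 'a) set" where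
  "series_stabilizer A l S = {g \<in> auto A. (\<forall>j\<le>l. g ` S j \<subseteq> S j) \<and>
     (\<forall>j<l. \<forall>x\<in>S j. g x \<otimes>\<^bsub>A\<^esub> inv\<^bsub>A\<^esub> x \<in> S (Suc j))}"

lemma is_series_drop_repeat:
  assumes S: "is_series A l S" and j: "j < l" "S (Suc j) = S j"
  shows "is_series A (l - 1) (\<lambda>k. if k \<le> j then S k else S (Suc k))"
proof -
  define S' where "S' = (\<lambda>k. if k \<le> j then S k else S (Suc k))"
  note W = S[unfolded is_series_def]
  have dec: "S (Suc k) \<subseteq> S k" if "k < l" for k using W that by blast
  have "is_series A (l - 1) S'"
    unfolding is_series_def
  proof (intro conjI allI impI)
    show "S' 0 = carrier A" using W by (simp add: S'_def)
    show "S' (l - 1) = {\<one>\<^bsub>A\<^esub>}"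
    proof (cases "l - 1 \<le> j")
      case True
      then have "j = l - 1" "Suc j = l" using j by simp_all
      then show ?thesis using j W by (simp add: S'_def)
    next
      case False
      then show ?thesis using j W by (simp add: S'_def)
    qed
    fix k
    show "k \<le> l - 1 \<Longrightarrow> subgroup (S' k) A" using W by (simp add: S'_def)
    assume k: "k < l - 1"
    consider "Suc k \<le> j" | "k = j" | "j < k" by linarith
    then show "S' (Suc k) \<subseteq> S' k"
    proof cases
      case 1
      then show ?thesis using dec[of k] k by (simp add: S'_def)
    next
      case 2
      then show ?thesis using dec[of "Suc j"] k j by (simp add: S'_def)
    next
      case 3
      then show ?thesis using dec[of "Suc k"] k by (simp add: S'_def)
    qed
  qed
  then show ?thesis unfolding S'_def .
qed

lemma series_stabilizer_drop_repeat:
  assumes j: "j < l" "S (Suc j) = S j"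
  shows "series_stabilizer A l S \<subseteq> series_stabilizer A (l - 1) (\<lambda>k. if k \<le> j then S k else S (Suc k))"
proof
  fix g assume "g \<in> series_stabilizer A l S"
  note g = this[unfolded series_stabilizer_def, simplified]
  show "g \<in> series_stabilizer A (l - 1) (\<lambda>k. if k \<le> j then S k else S (Suc k))"
    unfolding series_stabilizer_def
  proof (intro CollectI conjI allI impI ballI)
    show "g \<in> auto A" using g by blast
    fix k
    show "k \<le> l - 1 \<Longrightarrow> g ` (if k \<le> j then S k else S (Suc k)) \<subseteq> (if k \<le> j then S k else S (Suc k))"
      using g j by auto
    fix x
    assume k: "k < l - 1" and x: "x \<in> (if k \<le> j then S k else S (Suc k))"
    show "g x \<otimes>\<^bsub>A\<^esub> inv\<^bsub>A\<^esub> x \<in> (if Suc k \<le> j then S (Suc k) else S (Suc (Suc k)))"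
    proof (cases "k < j")
      case True
      then show ?thesis using g x k j by simp
    next
      case False
      then have "x \<in> S (Suc k)" using x j by (cases "k = j") auto
      then have "g x \<otimes>\<^bsub>A\<^esub> inv\<^bsub>A\<^esub> x \<in> S (Suc (Suc k))" using g k by simp
      then show ?thesis using False by simp
    qed
  qed
qed

lemma subset_series_stabilizer_iff:
  "H \<subseteq> series_stabilizer A l S \<longleftrightarrow> H \<subseteq> auto A \<and> (\<forall>n\<in>H. \<forall>j\<le>l. n ` S j \<subseteq> S j) \<and>
     (\<forall>n\<in>H. \<forall>j<l. \<forall>x\<in>S j. n x \<otimes>\<^bsub>A\<^esub> inv\<^bsub>A\<^esub> x \<in> S (Suc j))"
  unfolding series_stabilizer_def by blast

lemma centralizes_series_if_stabilized:
  assumes "is_series A l S" "H \<subseteq> series_stabilizer A l S"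
  shows "centralizes_series A H"
  using assms
proof (induction l arbitrary: S rule: less_induct)
  case (less l)
  show ?case
  proof (cases "\<forall>j<l. S (Suc j) \<subset> S j")
    case True
    with less.prems show ?thesis
      unfolding centralizes_series_def is_series_def subset_series_stabilizer_iff
      by (intro exI[of _ l] exI[of _ S]) simp
  next
    case False
    then obtain j where j: "j < l" "S (Suc j) = S j"
      using less.prems(1) unfolding is_series_def by blast
    have "l - 1 < l" using j by simp
    then show ?thesis
      using less.IH is_series_drop_repeat[OF less.prems(1) j]
        subset_trans[OF less.prems(2) series_stabilizer_drop_repeat[OF j]] by blast
  qed
qed

lemma stabilized_series_if_centralizes_series:
  assumes "centralizes_series A H" "H \<subseteq> auto A"
  shows "\<exists>l S. is_series A l S \<and> H \<subseteq> series_stabilizer A l S"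
proof -
  obtain l S where "S 0 = carrier A" "S l = {\<one>\<^bsub>A\<^esub>}" "\<forall>j\<le>l. subgroup (S j) A"
    "\<forall>j<l. S (Suc j) \<subset> S j" "\<forall>n\<in>H. \<forall>j\<le>l. n ` S j \<subseteq> S j"
    "\<forall>n\<in>H. \<forall>j<l. \<forall>x\<in>S j. n x \<otimes>\<^bsub>A\<^esub> inv\<^bsub>A\<^esub> x \<in> S (Suc j)"
    using assms(1) unfolding centralizes_series_def by (elim exE conjE)
  with assms(2) have "is_series A l S \<and> H \<subseteq> series_stabilizer A l S"
    unfolding is_series_def subset_series_stabilizer_iff by (simp add: less_imp_le psubset_imp_subset)
  then show ?thesis by blast
qed

lemma F_relevant_iff_eq_one:
  assumes "N \<lhd> (AutoGroup A)\<lparr>carrier := U\<rparr>" "centralizes_series A N"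
    and greatest: "\<And>H. H \<lhd> (AutoGroup A)\<lparr>carrier := U\<rparr> \<Longrightarrow> centralizes_series A H \<Longrightarrow> H \<subseteq> N"
  shows "F_relevant A U \<longleftrightarrow> N = {\<one>\<^bsub>AutoGroup A\<^esub>}"
  unfolding F_relevant_def
proof (intro iffI allI impI)
  assume "\<forall>H. H \<lhd> (AutoGroup A)\<lparr>carrier := U\<rparr> \<and> centralizes_series A H \<longrightarrow> H = {\<one>\<^bsub>AutoGroup A\<^esub>}"
  then show "N = {\<one>\<^bsub>AutoGroup A\<^esub>}" using assms(1,2) by blast
next
  fix H assume "N = {\<one>\<^bsub>AutoGroup A\<^esub>}" and H: "H \<lhd> (AutoGroup A)\<lparr>carrier := U\<rparr> \<and> centralizes_series A H"
  then have "H \<subseteq> {\<one>\<^bsub>AutoGroup A\<^esub>}" using greatest by blast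
  moreover have "\<one>\<^bsub>AutoGroup A\<^esub> \<in> H" using subgroup.one_closed[OF normal_imp_subgroup] H by fastforce
  ultimately show "H = {\<one>\<^bsub>AutoGroup A\<^esub>}" by blast
qed

context group
begin

lemma series_stabilizer_image_eq:
  assumes fin: "finite (carrier G)" and sg: "subgroup (S j) G" and j: "j \<le> l"
    and g: "g \<in> series_stabilizer G l S"
  shows "g ` S j = S j"
proof -
  have ga: "g \<in> auto G" and into: "g ` S j \<subseteq> S j"
    using g j unfolding series_stabilizer_def by auto
  have SG: "S j \<subseteq> carrier G" using sg subgroup.subset by blast
  have "inj_on g (S j)" using inj_on_subset[OF auto_inj_on[OF ga] SG] .
  then show ?thesis using endo_inj_surj[OF finite_subset[OF SG fin] into] by blast
qed

lemma series_stabilizer_inv_closed: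
  assumes fin: "finite (carrier G)" and sg: "\<And>j. j \<le> l \<Longrightarrow> subgroup (S j) G"
    and g: "g \<in> series_stabilizer G l S"
  shows "inv\<^bsub>AutoGroup G\<^esub> g \<in> series_stabilizer G l S"
proof -
  let ?h = "inv\<^bsub>AutoGroup G\<^esub> g"
  have ga: "g \<in> auto G" using g unfolding series_stabilizer_def by blast
  have SG: "S j \<subseteq> carrier G" if "j \<le> l" for j using sg[OF that] subgroup.subset by blast
  have preimage: "\<exists>z\<in>S j. x = g z" if "j \<le> l" "x \<in> S j" for j x
  proof -
    have "x \<in> g ` S j" using series_stabilizer_image_eq[OF fin sg[OF that(1)] that(1) g] that(2) by simp
    then show ?thesis by blast
  qed
  show ?thesis
    unfolding series_stabilizer_def
  proof (intro CollectI conjI allI impI ballI)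
    show "?h \<in> auto G" by (rule AutoGroup_inv_closed[OF ga])
  next
    fix j assume j: "j \<le> l"
    show "?h ` S j \<subseteq> S j"
    proof
      fix y assume "y \<in> ?h ` S j"
      then obtain x where x: "x \<in> S j" "y = ?h x" by blast
      then obtain z where z: "z \<in> S j" "x = g z" using preimage j by blast
      then show "y \<in> S j" using x AutoGroup_inv_apply(1)[OF ga] SG[OF j] by auto
    qed
  next
    fix j x assume j: "j < l" and x: "x \<in> S j"
    then obtain z where z: "z \<in> S j" "x = g z" using preimage[of j x] by auto
    have zG: "z \<in> carrier G" and gzG: "g z \<in> carrier G"
      using z(1) SG[of j] j auto_closed[OF ga] by auto
    have "g z \<otimes> inv z \<in> S (Suc j)" using g j z unfolding series_stabilizer_def by blast
    then have "inv (g z \<otimes> inv z) \<in> S (Suc j)" using sg[of "Suc j"] j subgroup.m_inv_closed by fastforce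
    moreover have "inv (g z \<otimes> inv z) = z \<otimes> inv (g z)" using zG gzG by (simp add: inv_mult_group)
    ultimately show "?h x \<otimes> inv x \<in> S (Suc j)" using z AutoGroup_inv_apply(1)[OF ga zG] by simp
  qed
qed

lemma series_stabilizer_mult_closed:
  assumes sg: "\<And>j. j \<le> l \<Longrightarrow> subgroup (S j) G"
    and g: "g \<in> series_stabilizer G l S" and h: "h \<in> series_stabilizer G l S"
  shows "g \<otimes>\<^bsub>AutoGroup G\<^esub> h \<in> series_stabilizer G l S"
proof -
  interpret Aut: group "AutoGroup G" by (rule AutoGroup)
  have ga: "g \<in> auto G" and ha: "h \<in> auto G" using g h unfolding series_stabilizer_def by blast+
  have SG: "S j \<subseteq> carrier G" if "j \<le> l" for j using sg[OF that] subgroup.subset by blast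
  show ?thesis
    unfolding series_stabilizer_def
  proof (intro CollectI conjI allI impI ballI)
    show "g \<otimes>\<^bsub>AutoGroup G\<^esub> h \<in> auto G"
      using Aut.m_closed ga ha carrier_AutoGroup by blast
  next
    fix j assume j: "j \<le> l"
    show "(g \<otimes>\<^bsub>AutoGroup G\<^esub> h) ` S j \<subseteq> S j"
    proof
      fix y assume "y \<in> (g \<otimes>\<^bsub>AutoGroup G\<^esub> h) ` S j"
      then obtain x where x: "x \<in> S j" "y = g (h x)"
        using AutoGroup_mult_apply[OF ga ha] SG[OF j] by auto
      then show "y \<in> S j" using g h j unfolding series_stabilizer_def by blast
    qed
  next
    fix j x assume j: "j < l" and x: "x \<in> S j"
    have xG: "x \<in> carrier G" using x SG[of j] j by auto
    have "h ` S j \<subseteq> S j" using h j unfolding series_stabilizer_def by auto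
    then have hx: "h x \<in> S j" using x by blast
    have hxG: "h x \<in> carrier G" and ghxG: "g (h x) \<in> carrier G" using auto_closed ga ha xG by auto
    have "g (h x) \<otimes> inv (h x) \<in> S (Suc j)" "h x \<otimes> inv x \<in> S (Suc j)"
      using g h j x hx unfolding series_stabilizer_def by blast+
    then have "(g (h x) \<otimes> inv (h x)) \<otimes> (h x \<otimes> inv x) \<in> S (Suc j)"
      using sg[of "Suc j"] j subgroup.m_closed by simp
    moreover have "(g (h x) \<otimes> inv (h x)) \<otimes> (h x \<otimes> inv x) = g (h x) \<otimes> inv x"
      using xG hxG ghxG by (simp add: m_assoc inv_mult_cancel_left)
    ultimately show "(g \<otimes>\<^bsub>AutoGroup G\<^esub> h) x \<otimes> inv x \<in> S (Suc j)"
      using AutoGroup_mult_apply[OF ga ha xG] by simp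
  qed
qed

lemma series_stabilizer_subgroup:
  assumes fin: "finite (carrier G)" and sg: "\<And>j. j \<le> l \<Longrightarrow> subgroup (S j) G"
  shows "subgroup (series_stabilizer G l S) (AutoGroup G)"
proof (rule group.subgroupI[OF AutoGroup])
  show "series_stabilizer G l S \<subseteq> carrier (AutoGroup G)"
    unfolding series_stabilizer_def carrier_AutoGroup by blast
  have SG: "S j \<subseteq> carrier G" if "j \<le> l" for j using sg[OF that] subgroup.subset by blast
  have "(\<lambda>x\<in>carrier G. x) \<in> series_stabilizer G l S"
    unfolding series_stabilizer_def
  proof (intro CollectI conjI allI impI ballI)
    show "(\<lambda>x\<in>carrier G. x) \<in> auto G" by (rule id_in_auto)
    show "(\<lambda>x\<in>carrier G. x) ` S j \<subseteq> S j" if "j \<le> l" for j using SG[OF that] by auto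
    fix j x assume j: "j < l" and "x \<in> S j"
    then have "x \<in> carrier G" using SG[of j] by auto
    then show "(\<lambda>x\<in>carrier G. x) x \<otimes> inv x \<in> S (Suc j)"
      using subgroup.one_closed[OF sg[of "Suc j"]] j by simp
  qed
  then show "series_stabilizer G l S \<noteq> {}" by blast
next
  show "inv\<^bsub>AutoGroup G\<^esub> g \<in> series_stabilizer G l S" if "g \<in> series_stabilizer G l S" for g
    using series_stabilizer_inv_closed[OF fin sg that] by blast
  show "g \<otimes>\<^bsub>AutoGroup G\<^esub> h \<in> series_stabilizer G l S"
    if "g \<in> series_stabilizer G l S" "h \<in> series_stabilizer G l S" for g h
    using series_stabilizer_mult_closed[OF sg that] by blast
qed

lemma image_mem_rcosets:
  assumes g: "g \<in> auto G" and B: "B \<subseteq> carrier G" "g ` B \<subseteq> B" and C: "C \<subseteq> carrier G" "g ` C = C"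
    and T: "T \<in> rcosets\<^bsub>G\<lparr>carrier := B\<rparr>\<^esub> C"
  shows "g ` T \<in> rcosets\<^bsub>G\<lparr>carrier := B\<rparr>\<^esub> C"
proof -
  obtain a where a: "a \<in> B" "T = C #> a" using T unfolding RCOSETS_def r_coset_def by auto
  then have "g ` T = C #> g a" using auto_image_r_coset[OF g C(1)] B(1) C(2) by auto
  moreover have "g a \<in> B" using B(2) a(1) by blast
  ultimately show ?thesis unfolding RCOSETS_def r_coset_def by auto
qed

section \<open>Upper central series of a $p$-group of automorphisms\<close>

lemma restrict_image_rcosets_Bij:
  assumes g: "g \<in> auto G" and B: "B \<subseteq> carrier G" "finite B" "g ` B \<subseteq> B"
    and C: "C \<subseteq> carrier G" "g ` C = C"
  shows "(\<lambda>T\<in>rcosets\<^bsub>G\<lparr>carrier := B\<rparr>\<^esub> C. g ` T) \<in> Bij (rcosets\<^bsub>G\<lparr>carrier := B\<rparr>\<^esub> C)"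
    (is "?\<psi> \<in> Bij ?E")
proof -
  have TG: "T \<subseteq> carrier G" if "T \<in> ?E" for T
    using that B(1) C(1) unfolding RCOSETS_def by (auto simp: r_coset_def)
  have "inj_on ?\<psi> ?E"
  proof (rule inj_onI)
    fix T1 T2 assume T: "T1 \<in> ?E" "T2 \<in> ?E" "?\<psi> T1 = ?\<psi> T2"
    then have "g ` T1 = g ` T2" by simp
    then show "T1 = T2" using inj_on_image_eq_iff[OF auto_inj_on[OF g] TG[OF T(1)] TG[OF T(2)]] by simp
  qed
  moreover have "finite ?E" unfolding RCOSETS_def using B(2) by simp
  moreover have "?\<psi> ` ?E \<subseteq> ?E" using image_mem_rcosets[OF g B(1,3) C] by auto
  ultimately have "bij_betw ?\<psi> ?E ?E" using endo_inj_surj by (simp add: bij_betw_def)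
  then show ?thesis by (simp add: Bij_def)
qed

lemma rcosets_group_action:
  assumes P: "subgroup P (AutoGroup G)" and B: "subgroup B G" "finite B"
    and C: "subgroup C G" "C \<subseteq> B"
    and PB: "\<And>g. g \<in> P \<Longrightarrow> g ` B \<subseteq> B" and PC: "\<And>g. g \<in> P \<Longrightarrow> g ` C = C"
  shows "group_action ((AutoGroup G)\<lparr>carrier := P\<rparr>) (rcosets\<^bsub>G\<lparr>carrier := B\<rparr>\<^esub> C)
           (\<lambda>g. \<lambda>T\<in>rcosets\<^bsub>G\<lparr>carrier := B\<rparr>\<^esub> C. g ` T)"
    (is "group_action ?P ?E ?\<psi>")
proof -
  interpret Aut: group "AutoGroup G" by (rule AutoGroup)
  have Pa: "P \<subseteq> auto G" using P subgroup.subset carrier_AutoGroup by blast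
  have BG: "B \<subseteq> carrier G" and CG: "C \<subseteq> carrier G" using B C subgroup.subset by blast+
  have TG: "T \<subseteq> carrier G" if "T \<in> ?E" for T
    using that CG BG unfolding RCOSETS_def by (auto simp: r_coset_def)
  have maps: "g ` T \<in> ?E" if g: "g \<in> P" and T: "T \<in> ?E" for g T
    using image_mem_rcosets[OF _ BG PB[OF g] CG PC[OF g] T] g Pa by blast
  have bij: "?\<psi> g \<in> Bij ?E" if g: "g \<in> P" for g
    using restrict_image_rcosets_Bij[OF _ BG B(2) PB[OF g] CG PC[OF g]] g Pa by blast
  have hom: "?\<psi> (g \<otimes>\<^bsub>AutoGroup G\<^esub> h) = ?\<psi> g \<otimes>\<^bsub>BijGroup ?E\<^esub> ?\<psi> h"
    if g: "g \<in> P" and h: "h \<in> P" for g h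
  proof -
    have ga: "g \<in> auto G" and ha: "h \<in> auto G" using g h Pa by blast+
    have "(g \<otimes>\<^bsub>AutoGroup G\<^esub> h) ` T = g ` (h ` T)" if "T \<in> ?E" for T
    proof -
      have "(g \<otimes>\<^bsub>AutoGroup G\<^esub> h) ` T = (\<lambda>x. g (h x)) ` T"
        using AutoGroup_mult_apply[OF ga ha] TG[OF that] by (intro image_cong) auto
      then show ?thesis by (simp add: image_image)
    qed
    then have "?\<psi> (g \<otimes>\<^bsub>AutoGroup G\<^esub> h) = compose ?E (?\<psi> g) (?\<psi> h)"
      unfolding compose_def using maps[OF h] by (intro restrict_ext) simp
    then show ?thesis using bij[OF g] bij[OF h] by (simp add: BijGroup_def)
  qed
  show ?thesis
    unfolding group_action_def
  proof (rule group_hom.intro)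
    show "group ?P" by (rule Aut.subgroup_imp_group[OF P])
    show "group (BijGroup ?E)" by (rule group_BijGroup)
    show "group_hom_axioms ?P (BijGroup ?E) ?\<psi>"
      unfolding group_hom_axioms_def
    proof (rule homI)
      show "?\<psi> g \<in> carrier (BijGroup ?E)" if "g \<in> carrier ?P" for g
        using bij that by (simp add: BijGroup_def)
      show "?\<psi> (g \<otimes>\<^bsub>?P\<^esub> h) = ?\<psi> g \<otimes>\<^bsub>BijGroup ?E\<^esub> ?\<psi> h" if "g \<in> carrier ?P" "h \<in> carrier ?P" for g h
        using hom that by simp
    qed
  qed
qed

lemma prime_dvd_card_rcosets:
  assumes p: "Factorial_Ring.prime p" and B: "subgroup B G" "card B = p ^ d"
    and C: "subgroup C G" "C \<subseteq> B" "C \<noteq> B"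
  shows "p dvd card (rcosets\<^bsub>G\<lparr>carrier := B\<rparr>\<^esub> C)"
proof -
  let ?E = "rcosets\<^bsub>G\<lparr>carrier := B\<rparr>\<^esub> C"
  have lag: "card ?E * card C = card B"
    using group.lagrange[OF subgroup_imp_group[OF B(1)] subgroup_incl[OF C(1) B(1) C(2)]]
    by (simp add: order_def)
  then have "card ?E dvd p ^ d" using B(2) by (metis dvd_triv_left)
  then obtain j where j: "card ?E = p ^ j" using divides_primepow_nat[OF p] by blast
  have "card B > 0" using B(2) prime_gt_0_nat[OF p] by simp
  then have "card C < card B" using psubset_card_mono[OF card_ge_0_finite] C(2,3) by blast
  have "j \<noteq> 0"
  proof
    assume "j = 0"
    with j lag have "card C = card B" by simp
    with \<open>card C < card B\<close> show False by simp
  qed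
  then show ?thesis using j by (simp add: dvd_power)
qed

text \<open>$P$ fixes the coset $C$, and the number of $P$-fixed cosets is divisible by $p$.\<close>
lemma ex_nontrivial_fixed_rcoset:
  assumes p: "Factorial_Ring.prime p"
    and P: "subgroup P (AutoGroup G)" "card P = p ^ n"
    and B: "subgroup B G" "card B = p ^ d" and PB: "\<And>g. g \<in> P \<Longrightarrow> g ` B \<subseteq> B"
    and C: "subgroup C G" "C \<subseteq> B" "C \<noteq> B" and PC: "\<And>g. g \<in> P \<Longrightarrow> g ` C \<subseteq> C"
  shows "\<exists>T\<in>rcosets\<^bsub>G\<lparr>carrier := B\<rparr>\<^esub> C. T \<noteq> C \<and> (\<forall>g\<in>P. g ` T = T)"
proof -
  let ?E = "rcosets\<^bsub>G\<lparr>carrier := B\<rparr>\<^esub> C"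
  let ?\<psi> = "\<lambda>g. \<lambda>T\<in>?E. g ` T"
  let ?F = "{T\<in>?E. \<forall>g\<in>P. ?\<psi> g T = T}"
  have Pa: "P \<subseteq> auto G" using P subgroup.subset carrier_AutoGroup by blast
  have CG: "C \<subseteq> carrier G" using C subgroup.subset by blast
  have "card B > 0" using B(2) prime_gt_0_nat[OF p] by simp
  then have finB: "finite B" by (rule card_ge_0_finite)
  then have finC: "finite C" using C(2) finite_subset by blast
  have PC_eq: "g ` C = C" if g: "g \<in> P" for g
  proof -
    have "g \<in> auto G" using g Pa by blast
    then show ?thesis using endo_inj_surj[OF finC PC[OF g] inj_on_subset[OF auto_inj_on CG]] by blast
  qed
  have finE: "finite ?E" unfolding RCOSETS_def using finB by simp
  interpret act: group_action "(AutoGroup G)\<lparr>carrier := P\<rparr>" ?E ?\<psi>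
    using rcosets_group_action[OF P(1) B(1) finB C(1,2) PB PC_eq] .
  have "[card ?E = card ?F] (mod p)"
    using act.card_cong_card_fixed_points[OF finE p] P(2) by (simp add: order_def)
  then have "p dvd card ?F" using prime_dvd_card_rcosets[OF p B C] cong_dvd_iff by blast
  have "C #> \<one> = C" using coset_mult_one[OF CG] .
  then have "C \<in> ?E" unfolding RCOSETS_def using subgroup.one_closed[OF B(1)] by force
  then have "C \<in> ?F" using PC_eq by simp
  moreover have "finite ?F" using finE by simp
  ultimately have "card ?F \<noteq> 0" by auto
  then have "card ?F \<ge> 2" using dvd_imp_le[OF \<open>p dvd card ?F\<close>] prime_ge_2_nat[OF p] by linarith
  have "\<not> ?F \<subseteq> {C}"
  proof
    assume "?F \<subseteq> {C}"
    then have "card ?F \<le> 1" using card_mono[of "{C}" ?F] by simp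
    with \<open>card ?F \<ge> 2\<close> show False by simp
  qed
  then obtain T where T: "T \<in> ?F" "T \<noteq> C" by blast
  then have "T \<in> ?E" by blast
  moreover have "g ` T = T" if "g \<in> P" for g
  proof -
    have "?\<psi> g T = T" using T(1) that by blast
    then show ?thesis using \<open>T \<in> ?E\<close> by simp
  qed
  ultimately show ?thesis using T(2) by blast
qed

lemma ex_fixed_element_mod_subgroup:
  assumes p: "Factorial_Ring.prime p"
    and P: "subgroup P (AutoGroup G)" "card P = p ^ n"
    and B: "subgroup B G" "card B = p ^ d" and PB: "\<And>g. g \<in> P \<Longrightarrow> g ` B \<subseteq> B"
    and C: "subgroup C G" "C \<subseteq> B" "C \<noteq> B" and PC: "\<And>g. g \<in> P \<Longrightarrow> g ` C \<subseteq> C"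
  shows "\<exists>x \<in> B - C. \<forall>g\<in>P. g x \<otimes> inv x \<in> C"
proof -
  obtain T where T: "T \<in> rcosets\<^bsub>G\<lparr>carrier := B\<rparr>\<^esub> C" "T \<noteq> C" "\<forall>g\<in>P. g ` T = T"
    using ex_nontrivial_fixed_rcoset[OF p P B PB C PC] by blast
  then obtain a where a: "a \<in> B" "T = C #> a" unfolding RCOSETS_def r_coset_def by auto
  have aG: "a \<in> carrier G" using a B subgroup.subset by blast
  have "a \<notin> C"
  proof
    assume "a \<in> C"
    then have "C #> a = C" using subgroup.rcos_const[OF C(1) is_group] by blast
    with T(2) a(2) show False by simp
  qed
  moreover have "g a \<otimes> inv a \<in> C" if "g \<in> P" for g
  proof -
    have "g a \<in> C #> a" using T(3) that a rcos_self[OF aG C(1)] by blast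
    then show ?thesis using subgroup.rcos_module_imp[OF C(1) is_group aG] by blast
  qed
  ultimately show ?thesis using a(1) by blast
qed

end

primrec upper_central_series :: "('a, 'b) monoid_scheme \<Rightarrow> ('a \<Rightarrow> 'a) set \<Rightarrow> 'a set \<Rightarrow> nat \<Rightarrow> 'a set" where
  "upper_central_series G P B 0 = {\<one>\<^bsub>G\<^esub>}"
| "upper_central_series G P B (Suc k) =
     {x \<in> B. \<forall>g\<in>P. g x \<otimes>\<^bsub>G\<^esub> inv\<^bsub>G\<^esub> x \<in> upper_central_series G P B k}"

context comm_group
begin

lemma upper_central_series_subset:
  "subgroup B G \<Longrightarrow> upper_central_series G P B k \<subseteq> B"
  using subgroup.one_closed by (cases k) auto

lemma subgroup_centralized_mod:
  assumes Pa: "P \<subseteq> auto G" and B: "subgroup B G" and Z: "subgroup Z G"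
  shows "subgroup {x \<in> B. \<forall>g\<in>P. g x \<otimes> inv x \<in> Z} G"
proof -
  have BG: "B \<subseteq> carrier G" using B subgroup.subset by blast
  show ?thesis
  proof (rule subgroupI)
    show "{x \<in> B. \<forall>g\<in>P. g x \<otimes> inv x \<in> Z} \<subseteq> carrier G" using BG by auto
    have "g \<one> \<otimes> inv \<one> \<in> Z" if "g \<in> P" for g
    proof -
      have "g \<in> auto G" using that Pa by blast
      then show ?thesis using auto_one[of g] subgroup.one_closed[OF Z] by simp
    qed
    then have "\<one> \<in> {x \<in> B. \<forall>g\<in>P. g x \<otimes> inv x \<in> Z}" using subgroup.one_closed[OF B] by simp
    then show "{x \<in> B. \<forall>g\<in>P. g x \<otimes> inv x \<in> Z} \<noteq> {}" by blast
  next
    fix x assume x: "x \<in> {x \<in> B. \<forall>g\<in>P. g x \<otimes> inv x \<in> Z}"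
    then have xB: "x \<in> B" and xG: "x \<in> carrier G" using BG by auto
    have "g (inv x) \<otimes> inv (inv x) \<in> Z" if g: "g \<in> P" for g
    proof -
      have ga: "g \<in> auto G" using g Pa by blast
      have "g x \<otimes> inv x \<in> Z" using x g by simp
      then have "inv (g x \<otimes> inv x) \<in> Z" using subgroup.m_inv_closed[OF Z] by blast
      moreover have "inv (g x \<otimes> inv x) = g (inv x) \<otimes> inv (inv x)"
        using auto_inv[OF ga xG] auto_closed[OF ga xG] xG by (simp add: inv_mult m_comm)
      ultimately show ?thesis by simp
    qed
    then show "inv x \<in> {x \<in> B. \<forall>g\<in>P. g x \<otimes> inv x \<in> Z}" using subgroup.m_inv_closed[OF B xB] by simp
  next
    fix x y assume x: "x \<in> {x \<in> B. \<forall>g\<in>P. g x \<otimes> inv x \<in> Z}" and y: "y \<in> {x \<in> B. \<forall>g\<in>P. g x \<otimes> inv x \<in> Z}"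
    then have xB: "x \<in> B" "x \<in> carrier G" and yB: "y \<in> B" "y \<in> carrier G" using BG by auto
    have "g (x \<otimes> y) \<otimes> inv (x \<otimes> y) \<in> Z" if g: "g \<in> P" for g
    proof -
      have ga: "g \<in> auto G" using g Pa by blast
      have "g x \<otimes> inv x \<in> Z" "g y \<otimes> inv y \<in> Z" using x y g by simp_all
      then have "(g x \<otimes> inv x) \<otimes> (g y \<otimes> inv y) \<in> Z" using subgroup.m_closed[OF Z] by blast
      moreover have "(g x \<otimes> inv x) \<otimes> (g y \<otimes> inv y) = g (x \<otimes> y) \<otimes> inv (x \<otimes> y)"
        using auto_mult[OF ga xB(2) yB(2)] auto_closed[OF ga] xB yB by (simp add: inv_mult m_ac)
      ultimately show ?thesis by simp
    qed
    then show "x \<otimes> y \<in> {x \<in> B. \<forall>g\<in>P. g x \<otimes> inv x \<in> Z}" using subgroup.m_closed[OF B xB(1) yB(1)] by simp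
  qed
qed

lemma upper_central_series_subgroup:
  "P \<subseteq> auto G \<Longrightarrow> subgroup B G \<Longrightarrow> subgroup (upper_central_series G P B k) G"
  by (induction k) (simp_all add: triv_subgroup subgroup_centralized_mod)

lemma upper_central_series_mono:
  assumes Pa: "P \<subseteq> auto G" and B: "subgroup B G"
  shows "upper_central_series G P B k \<subseteq> upper_central_series G P B (Suc k)"
proof (induction k)
  case 0
  have "g \<one> \<otimes> inv \<one> = \<one>" if "g \<in> P" for g
  proof -
    have "g \<in> auto G" using that Pa by blast
    then show ?thesis using auto_one[of g] by simp
  qed
  then show ?case using subgroup.one_closed[OF B] by simp
next
  case (Suc k)
  then show ?case by auto
qed

lemma upper_central_series_invariant:
  assumes P: "subgroup P (AutoGroup G)" and B: "subgroup B G" and PB: "\<And>g. g \<in> P \<Longrightarrow> g ` B \<subseteq> B"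
  shows "g \<in> P \<Longrightarrow> g ` upper_central_series G P B k \<subseteq> upper_central_series G P B k"
proof (induction k arbitrary: g)
  case 0
  then show ?case using P subgroup.subset carrier_AutoGroup auto_one by fastforce
next
  case (Suc k)
  interpret Aut: group "AutoGroup G" by (rule AutoGroup)
  let ?Z = "upper_central_series G P B"
  have Pa: "P \<subseteq> auto G" using P subgroup.subset carrier_AutoGroup by blast
  have ga: "g \<in> auto G" using Suc.prems Pa by blast
  show ?case
  proof
    fix y assume "y \<in> g ` ?Z (Suc k)"
    then obtain x where x: "x \<in> ?Z (Suc k)" and y: "y = g x" by blast
    have xB: "x \<in> B" using x by simp
    have xG: "x \<in> carrier G" using xB B subgroup.subset by blast
    have "f (g x) \<otimes> inv (g x) \<in> ?Z k" if f: "f \<in> P" for f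
    proof -
      let ?f' = "inv\<^bsub>AutoGroup G\<^esub> g \<otimes>\<^bsub>AutoGroup G\<^esub> f \<otimes>\<^bsub>AutoGroup G\<^esub> g"
      have f'P: "?f' \<in> P"
        using subgroup.m_closed[OF P] subgroup.m_inv_closed[OF P] Suc.prems f by metis
      then have f'a: "?f' \<in> auto G" using Pa by blast
      have fa: "f \<in> auto G" using f Pa by blast
      have "?f' x \<otimes> inv x \<in> ?Z k" using x f'P by simp
      then have "g (?f' x \<otimes> inv x) \<in> ?Z k" using Suc.IH[OF Suc.prems] by blast
      moreover have "g \<otimes>\<^bsub>AutoGroup G\<^esub> ?f' = f \<otimes>\<^bsub>AutoGroup G\<^esub> g"
        using ga fa unfolding carrier_AutoGroup[symmetric]
        by (simp add: Aut.m_assoc Aut.mult_inv_cancel_left)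
      then have "g (?f' x) = f (g x)"
        using AutoGroup_mult_apply[OF ga f'a xG] AutoGroup_mult_apply[OF fa ga xG] by metis
      moreover have "g (?f' x \<otimes> inv x) = g (?f' x) \<otimes> inv (g x)"
        using auto_mult[OF ga auto_closed[OF f'a xG]] auto_inv[OF ga xG] xG by simp
      ultimately show ?thesis by simp
    qed
    moreover have "g x \<in> B" using PB[OF Suc.prems] xB by blast
    ultimately show "y \<in> ?Z (Suc k)" using y by simp
  qed
qed

lemma upper_central_series_eq:
  assumes p: "Factorial_Ring.prime p" and P: "subgroup P (AutoGroup G)" "card P = p ^ n"
    and B: "subgroup B G" "card B = p ^ d" and PB: "\<And>g. g \<in> P \<Longrightarrow> g ` B \<subseteq> B"
    and k: "card B \<le> k"
  shows "upper_central_series G P B k = B"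
proof -
  let ?Z = "upper_central_series G P B"
  have Pa: "P \<subseteq> auto G" using P subgroup.subset carrier_AutoGroup by blast
  have finB: "finite B" using B(2) prime_gt_0_nat[OF p] card_ge_0_finite by force
  have grow: "card (?Z j) < card (?Z (Suc j))" if ne: "?Z j \<noteq> B" for j
  proof -
    obtain x where x: "x \<in> B - ?Z j" "\<forall>g\<in>P. g x \<otimes> inv x \<in> ?Z j"
      using ex_fixed_element_mod_subgroup[OF p P B PB upper_central_series_subgroup[OF Pa B(1)]
          upper_central_series_subset[OF B(1)] ne upper_central_series_invariant[OF P(1) B(1) PB]] by blast
    then have "x \<in> ?Z (Suc j) - ?Z j" by simp
    moreover have "finite (?Z (Suc j))" using upper_central_series_subset[OF B(1)] finB finite_subset by blast
    ultimately show ?thesis using upper_central_series_mono[OF Pa B(1)] psubset_card_mono by blast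
  qed
  have "?Z j = B \<or> j < card (?Z j)" for j
  proof (induction j)
    case 0
    then show ?case by simp
  next
    case (Suc j)
    show ?case
    proof (cases "?Z j = B")
      case True
      then show ?thesis
        using upper_central_series_mono[OF Pa B(1), of j] upper_central_series_subset[OF B(1)] by blast
    next
      case False
      then show ?thesis using Suc.IH grow[OF False] by simp
    qed
  qed
  moreover have "card (?Z k) \<le> card B" using upper_central_series_subset[OF B(1)] finB card_mono by blast
  ultimately show ?thesis using k by fastforce
qed

end

section \<open>Elementary abelian groups with a primary decomposition\<close>

lemma chinese_remainder_indicator_nat:
  fixes q :: "'i \<Rightarrow> nat"
  assumes "finite I" and "\<forall>i\<in>I. \<forall>j\<in>I. i \<noteq> j \<longrightarrow> coprime (q i) (q j)"
  shows "\<exists>m. \<forall>i\<in>I. \<forall>j\<in>I. [m i = (if i = j then 1 else 0)] (mod q j)"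
proof -
  have "\<exists>x. \<forall>j\<in>I. [x = (if i = j then 1 else 0)] (mod q j)" for i
    using chinese_remainder_nat[OF assms, of "\<lambda>j. if i = j then 1 else 0"] .
  then have "\<forall>i\<in>I. \<exists>x. \<forall>j\<in>I. [x = (if i = j then 1 else 0)] (mod q j)" by blast
  then show ?thesis by (rule bchoice)
qed

locale elementary_abelian_decomposition = comm_group A
  for A :: "('a, 'b) monoid_scheme" (structure) +
  fixes Ai :: "nat \<Rightarrow> 'a set" and p d :: "nat \<Rightarrow> nat" and r :: nat
  assumes primes: "\<forall>i<r. Factorial_Ring.prime (p i)"
    and distinct: "inj_on p {..<r}"
    and Ai_sub: "\<forall>i<r. subgroup (Ai i) A"
    and Ai_card: "\<forall>i<r. card (Ai i) = p i ^ d i"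
    and Ai_elem: "\<forall>i<r. \<forall>x\<in>Ai i. x [^]\<^bsub>A\<^esub> p i = \<one>\<^bsub>A\<^esub>"
    and dirprod: "bij_betw (\<lambda>x. finprod A x {..<r}) (\<Pi>\<^sub>E i\<in>{..<r}. Ai i) (carrier A)"
begin

abbreviation Aut where "Aut \<equiv> AutoGroup A"

sublocale Aut: group Aut by (rule AutoGroup)

lemma Ai_subset_carrier: "i < r \<Longrightarrow> Ai i \<subseteq> carrier A"
  using Ai_sub subgroup.subset by blast

lemma finite_Ai: "i < r \<Longrightarrow> finite (Ai i)"
  using Ai_card primes prime_gt_0_nat card_ge_0_finite by (metis zero_less_power)

lemma PiE_Ai_funcset: "f \<in> (\<Pi>\<^sub>E i\<in>{..<r}. Ai i) \<Longrightarrow> f \<in> {..<r} \<rightarrow> carrier A"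
  using Ai_subset_carrier by (auto simp: PiE_def Pi_def)

lemma ex_finprod_decomposition: "x \<in> carrier A \<Longrightarrow> \<exists>f\<in>(\<Pi>\<^sub>E i\<in>{..<r}. Ai i). x = finprod A f {..<r}"
  using bij_betw_imp_surj_on[OF dirprod] by auto

lemma finite_carrier: "finite (carrier A)"
proof -
  have "finite (\<Pi>\<^sub>E i\<in>{..<r}. Ai i)" by (rule finite_PiE) (auto simp: finite_Ai)
  then show ?thesis using bij_betw_imp_surj_on[OF dirprod] by (metis finite_imageI)
qed

text \<open>By uniqueness of the decomposition every component of $x$ is killed by $p_i$; for $j \neq i$
  it is also killed by $p_j$, hence trivial.\<close>
lemma mem_Ai_if_pow_prime_eq_one:
  assumes i: "i < r" and x: "x \<in> carrier A" and xp: "x [^] p i = \<one>"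
  shows "x \<in> Ai i"
proof -
  obtain f where f: "f \<in> (\<Pi>\<^sub>E i\<in>{..<r}. Ai i)" and xf: "x = finprod A f {..<r}"
    using ex_finprod_decomposition x by blast
  have fG: "f \<in> {..<r} \<rightarrow> carrier A" using PiE_Ai_funcset f .
  define f' where "f' = (\<lambda>j\<in>{..<r}. f j [^] p i)"
  define e where "e = (\<lambda>j\<in>{..<r}. \<one>)"
  have f'E: "f' \<in> (\<Pi>\<^sub>E i\<in>{..<r}. Ai i)"
    unfolding f'_def using f Ai_sub subgroup_nat_pow_closed by (auto simp: PiE_def Pi_def)
  have eE: "e \<in> (\<Pi>\<^sub>E i\<in>{..<r}. Ai i)"
    unfolding e_def using Ai_sub subgroup.one_closed by (auto simp: PiE_def Pi_def)
  have "finprod A f' {..<r} = finprod A (\<lambda>j. f j [^] p i) {..<r}"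
    unfolding f'_def by (rule finprod_cong') (use fG in auto)
  also have "\<dots> = x [^] p i"
    using hom_finprod[OF _ fG, of "\<lambda>x. x [^] p i"] xf by (simp add: homI nat_pow_distrib)
  also have "\<dots> = finprod A (\<lambda>j. \<one>) {..<r}" using xp by simp
  also have "\<dots> = finprod A e {..<r}" unfolding e_def by (rule finprod_cong') auto
  finally have "f' = e" using bij_betw_imp_inj_on[OF dirprod] f'E eE by (simp add: inj_on_def)
  then have fp: "f j [^] p i = \<one>" if "j < r" for j
    using that unfolding f'_def e_def by (metis lessThan_iff restrict_apply')
  have f1: "f j = \<one>" if j: "j < r" "j \<noteq> i" for j
  proof -
    have "p j \<noteq> p i" using distinct j i by (auto simp: inj_on_def)
    then have "coprime (p i) (p j)" using primes i j primes_coprime by metis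
    moreover have "f j \<in> Ai j" using f j by auto
    ultimately show ?thesis
      using eq_one_if_coprime_exponents[OF _ fp[OF j(1)], of "p j"] Ai_elem Ai_subset_carrier j by blast
  qed
  have "x = finprod A (\<lambda>j. if j = i then f j else \<one>) {..<r}"
    unfolding xf by (rule finprod_cong') (use fG f1 i in auto)
  also have "\<dots> = f i" using finprod_singleton_swap[of i "{..<r}" f] i fG by simp
  finally show ?thesis using f i by auto
qed

lemma auto_maps_Ai:
  assumes g: "g \<in> auto A" and i: "i < r" and x: "x \<in> Ai i"
  shows "g x \<in> Ai i"
proof -
  have xG: "x \<in> carrier A" using x Ai_subset_carrier i by blast
  have "g x [^] p i = g (x [^] p i)" using auto_nat_pow[OF g xG] by simp
  also have "\<dots> = \<one>" using Ai_elem i x auto_one[OF g] by simp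
  finally have "g x [^] p i = \<one>" .
  then show ?thesis using mem_Ai_if_pow_prime_eq_one i auto_closed[OF g xG] by blast
qed

lemma auto_eq_if_eq_on_Ai:
  assumes g: "g \<in> auto A" and h: "h \<in> auto A"
    and eq: "\<And>i x. i < r \<Longrightarrow> x \<in> Ai i \<Longrightarrow> g x = h x"
  shows "g = h"
proof (rule auto_eqI[OF g h])
  fix x assume "x \<in> carrier A"
  then obtain f where f: "f \<in> (\<Pi>\<^sub>E i\<in>{..<r}. Ai i)" and xf: "x = finprod A f {..<r}"
    using ex_finprod_decomposition by blast
  have fG: "f \<in> {..<r} \<rightarrow> carrier A" using PiE_Ai_funcset f .
  have hom: "g \<in> hom A A" "h \<in> hom A A" using g h by (simp_all add: auto_def)
  have "g x = finprod A (\<lambda>i. g (f i)) {..<r}" using hom_finprod[OF hom(1) fG] xf by simp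
  also have "\<dots> = finprod A (\<lambda>i. h (f i)) {..<r}"
    by (rule finprod_cong') (use f eq auto_closed[OF h] fG in \<open>auto simp: Pi_def\<close>)
  also have "\<dots> = h x" using hom_finprod[OF hom(2) fG] xf by simp
  finally show "g x = h x" .
qed

lemma GL_factor_subgroup: "subgroup (GL_factor A Ai r i) Aut"
proof (rule Aut.subgroupI)
  show "GL_factor A Ai r i \<subseteq> carrier Aut" unfolding GL_factor_def carrier_AutoGroup by blast
  have "(\<lambda>x\<in>carrier A. x) \<in> GL_factor A Ai r i"
    unfolding GL_factor_def using id_in_auto Ai_subset_carrier by auto
  then show "GL_factor A Ai r i \<noteq> {}" by blast
next
  fix g assume g: "g \<in> GL_factor A Ai r i"
  then have ga: "g \<in> auto A" unfolding GL_factor_def by blast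
  show "inv\<^bsub>Aut\<^esub> g \<in> GL_factor A Ai r i"
    unfolding GL_factor_def
  proof (intro CollectI conjI allI impI ballI)
    show "inv\<^bsub>Aut\<^esub> g \<in> auto A" using AutoGroup_inv_closed[OF ga] .
    fix j x assume j: "j < r" "j \<noteq> i" and x: "x \<in> Ai j"
    then have "g x = x" "x \<in> carrier A" using g Ai_subset_carrier unfolding GL_factor_def by auto
    then show "(inv\<^bsub>Aut\<^esub> g) x = x" using AutoGroup_inv_apply(1)[OF ga, of x] by simp
  qed
next
  fix g h assume g: "g \<in> GL_factor A Ai r i" and h: "h \<in> GL_factor A Ai r i"
  then have ga: "g \<in> auto A" and ha: "h \<in> auto A" unfolding GL_factor_def by blast+
  show "g \<otimes>\<^bsub>Aut\<^esub> h \<in> GL_factor A Ai r i"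
    unfolding GL_factor_def
  proof (intro CollectI conjI allI impI ballI)
    show "g \<otimes>\<^bsub>Aut\<^esub> h \<in> auto A" using Aut.m_closed ga ha carrier_AutoGroup by blast
    fix j x assume j: "j < r" "j \<noteq> i" and x: "x \<in> Ai j"
    then have "g x = x" "h x = x" "x \<in> carrier A" using g h Ai_subset_carrier unfolding GL_factor_def by auto
    then show "(g \<otimes>\<^bsub>Aut\<^esub> h) x = x" using AutoGroup_mult_apply[OF ga ha] by simp
  qed
qed

lemma GL_factor_conj_closed:
  assumes a: "a \<in> auto A" and g: "g \<in> GL_factor A Ai r i"
  shows "a \<otimes>\<^bsub>Aut\<^esub> g \<otimes>\<^bsub>Aut\<^esub> inv\<^bsub>Aut\<^esub> a \<in> GL_factor A Ai r i"
  unfolding GL_factor_def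
proof (intro CollectI conjI allI impI ballI)
  have ga: "g \<in> auto A" and ia: "inv\<^bsub>Aut\<^esub> a \<in> auto A"
    using g AutoGroup_inv_closed[OF a] unfolding GL_factor_def by blast+
  then show "a \<otimes>\<^bsub>Aut\<^esub> g \<otimes>\<^bsub>Aut\<^esub> inv\<^bsub>Aut\<^esub> a \<in> auto A"
    using a Aut.m_closed carrier_AutoGroup by metis
  fix j x assume j: "j < r" "j \<noteq> i" and x: "x \<in> Ai j"
  have xG: "x \<in> carrier A" using x Ai_subset_carrier j by blast
  have "(inv\<^bsub>Aut\<^esub> a) x \<in> Ai j" using auto_maps_Ai[OF ia j(1) x] .
  then have "g ((inv\<^bsub>Aut\<^esub> a) x) = (inv\<^bsub>Aut\<^esub> a) x" using g j unfolding GL_factor_def by blast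
  moreover have "a \<otimes>\<^bsub>Aut\<^esub> g \<in> auto A" using a ga Aut.m_closed carrier_AutoGroup by metis
  ultimately have "(a \<otimes>\<^bsub>Aut\<^esub> g \<otimes>\<^bsub>Aut\<^esub> inv\<^bsub>Aut\<^esub> a) x = a ((inv\<^bsub>Aut\<^esub> a) x)"
    using AutoGroup_mult_apply[OF _ ia xG] AutoGroup_mult_apply[OF a ga] auto_closed[OF ia xG] by simp
  then show "(a \<otimes>\<^bsub>Aut\<^esub> g \<otimes>\<^bsub>Aut\<^esub> inv\<^bsub>Aut\<^esub> a) x = x" using AutoGroup_inv_apply(2)[OF a xG] by simp
qed

lemma sigma_subgroup: "subgroup U Aut \<Longrightarrow> subgroup (sigma A Ai r U i) Aut"
  unfolding sigma_def using Aut.subgroups_Inter_pair GL_factor_subgroup by blast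

lemma finite_sigma: "finite (sigma A Ai r U i)"
  using finite_auto[OF finite_carrier] unfolding sigma_def GL_factor_def by (auto intro: finite_subset)

lemma series_stabilizer_pow_prime_fixes:
  assumes f: "f \<in> series_stabilizer A l S" and i: "i < r" and j: "j < l"
    and fixed: "\<And>y. y \<in> Ai i \<inter> S (Suc j) \<Longrightarrow> f y = y" and x: "x \<in> Ai i \<inter> S j"
  shows "(f [^]\<^bsub>Aut\<^esub> p i) x = x"
proof -
  have fa: "f \<in> auto A" using f unfolding series_stabilizer_def by blast
  have Ai: "subgroup (Ai i) A" using Ai_sub i by blast
  have xG: "x \<in> carrier A" using x Ai_subset_carrier i by blast
  define z where "z = f x \<otimes> inv x"
  have "z \<in> S (Suc j)" using f j x unfolding z_def series_stabilizer_def by blast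
  moreover have zAi: "z \<in> Ai i"
    unfolding z_def using auto_maps_Ai[OF fa i] x subgroup.m_closed[OF Ai] subgroup.m_inv_closed[OF Ai] by blast
  ultimately have fz: "f z = z" using fixed by blast
  have zG: "z \<in> carrier A" using zAi Ai_subset_carrier i by blast
  have "f x = z \<otimes> x" unfolding z_def using xG auto_closed[OF fa xG] by (simp add: m_assoc)
  then have "(f [^]\<^bsub>Aut\<^esub> p i) x = x \<otimes> z [^] p i"
    using AutoGroup_nat_pow_apply_translation[OF fa xG zG fz] by simp
  also have "\<dots> = x" using Ai_elem i zAi xG by simp
  finally show ?thesis .
qed

text \<open>Going down the series, each step multiplies the exponent needed to fix $A_i$ by $p_i$.\<close>
lemma series_stabilizer_pow_fixes_Ai:
  assumes S: "is_series A l S" and g: "g \<in> series_stabilizer A l S" and i: "i < r" and x: "x \<in> Ai i"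
  shows "(g [^]\<^bsub>Aut\<^esub> (p i ^ l)) x = x"
proof -
  have sg: "subgroup (S j) A" if "j \<le> l" for j using S that unfolding is_series_def by blast
  have stab: "subgroup (series_stabilizer A l S) Aut"
    using series_stabilizer_subgroup[OF finite_carrier sg] .
  have gA: "g \<in> carrier Aut" using g stab subgroup.subset by blast
  have "\<forall>x \<in> Ai i \<inter> S (l - m). (g [^]\<^bsub>Aut\<^esub> (p i ^ m)) x = x" if "m \<le> l" for m
    using that
  proof (induction m)
    case 0
    have "g \<in> auto A" using g unfolding series_stabilizer_def by blast
    then show ?case using gA S auto_one unfolding is_series_def by simp
  next
    case (Suc m)
    define f where "f = g [^]\<^bsub>Aut\<^esub> (p i ^ m)"
    have fS: "f \<in> series_stabilizer A l S" unfolding f_def using Aut.subgroup_nat_pow_closed[OF stab g] .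
    have lm: "l - Suc m < l" "Suc (l - Suc m) = l - m" using Suc.prems by auto
    have "f y = y" if "y \<in> Ai i \<inter> S (Suc (l - Suc m))" for y using Suc that lm(2) f_def by simp
    then have "(f [^]\<^bsub>Aut\<^esub> p i) x = x" if "x \<in> Ai i \<inter> S (l - Suc m)" for x
      using series_stabilizer_pow_prime_fixes[OF fS i lm(1) _ that] by blast
    moreover have "g [^]\<^bsub>Aut\<^esub> (p i ^ Suc m) = f [^]\<^bsub>Aut\<^esub> p i"
      unfolding f_def using Aut.nat_pow_pow[OF gA] by (simp add: mult.commute)
    ultimately show ?case by simp
  qed
  moreover have "x \<in> Ai i \<inter> S (l - l)" using S x Ai_subset_carrier[OF i] unfolding is_series_def by auto
  ultimately show ?thesis by blast
qed

lemma GL_factor_nat_pow: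
  assumes h: "h \<in> auto A" and i: "i < r"
    and fixed: "\<And>j x. j < r \<Longrightarrow> x \<in> Ai j \<Longrightarrow> (h [^]\<^bsub>Aut\<^esub> q j) x = x"
    and dvd: "\<And>j. j < r \<Longrightarrow> j \<noteq> i \<Longrightarrow> q j dvd m"
  shows "h [^]\<^bsub>Aut\<^esub> (m::nat) \<in> GL_factor A Ai r i"
  unfolding GL_factor_def
proof (intro CollectI conjI allI impI ballI)
  show "h [^]\<^bsub>Aut\<^esub> m \<in> auto A" by (rule AutoGroup_nat_pow_closed[OF h])
  fix j x assume j: "j < r" "j \<noteq> i" and x: "x \<in> Ai j"
  have xG: "x \<in> carrier A" using x Ai_subset_carrier j by blast
  have "[m = 0] (mod q j)" using dvd[OF j] by (simp add: cong_0_iff)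
  then have "(h [^]\<^bsub>Aut\<^esub> m) x = (h [^]\<^bsub>Aut\<^esub> (0::nat)) x"
    by (rule AutoGroup_nat_pow_apply_cong[OF h xG fixed[OF j(1) x]])
  then show "(h [^]\<^bsub>Aut\<^esub> m) x = x" using xG by (simp add: one_AutoGroup)
qed

lemma nat_pow_eq_if_cong:
  assumes h: "h \<in> auto A"
    and fixed: "\<And>j x. j < r \<Longrightarrow> x \<in> Ai j \<Longrightarrow> (h [^]\<^bsub>Aut\<^esub> q j) x = x"
    and cong: "\<And>j. j < r \<Longrightarrow> [a = b] (mod q j)"
  shows "h [^]\<^bsub>Aut\<^esub> (a::nat) = h [^]\<^bsub>Aut\<^esub> (b::nat)"
proof (rule auto_eq_if_eq_on_Ai[OF AutoGroup_nat_pow_closed[OF h] AutoGroup_nat_pow_closed[OF h]])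
  fix j x assume j: "j < r" and x: "x \<in> Ai j"
  then have "x \<in> carrier A" using Ai_subset_carrier by blast
  then show "(h [^]\<^bsub>Aut\<^esub> a) x = (h [^]\<^bsub>Aut\<^esub> b) x"
    using AutoGroup_nat_pow_apply_cong[OF h _ fixed[OF j x] cong[OF j]] by blast
qed

text \<open>By the Chinese remainder theorem, $h = \prod_i h^{m_i}$ with $m_i \equiv \delta_{ij}$
  modulo the order $p_j^l$ of $h$ on $A_j$; each $h^{m_i}$ acts only on $A_i$.\<close>
lemma mem_generate_GL_factor_powers:
  assumes h: "h \<in> auto A"
    and fixed: "\<And>j x. j < r \<Longrightarrow> x \<in> Ai j \<Longrightarrow> (h [^]\<^bsub>Aut\<^esub> (p j ^ l)) x = x"
  shows "h \<in> generate Aut (\<Union>i<r. {h [^]\<^bsub>Aut\<^esub> (n::nat) | n. h [^]\<^bsub>Aut\<^esub> n \<in> GL_factor A Ai r i})"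
    (is "h \<in> generate Aut ?W")
proof -
  have hA: "h \<in> carrier Aut" using h carrier_AutoGroup by simp
  have "coprime (p i ^ l) (p j ^ l)" if "i < r" "j < r" "i \<noteq> j" for i j
  proof -
    have "p i \<noteq> p j" using distinct that by (auto simp: inj_on_def)
    then have "coprime (p i) (p j)" using primes that primes_coprime by blast
    then show ?thesis by simp
  qed
  then obtain m where m: "\<forall>i\<in>{..<r}. \<forall>j\<in>{..<r}. [m i = (if i = j then 1 else 0)] (mod p j ^ l)"
    using chinese_remainder_indicator_nat[of "{..<r}" "\<lambda>j. p j ^ l"] by auto
  have part: "h [^]\<^bsub>Aut\<^esub> m i \<in> ?W" if i: "i < r" for i
  proof -
    have dvd: "p j ^ l dvd m i" if "j < r" "j \<noteq> i" for j
    proof -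
      have "[m i = (if i = j then 1 else 0)] (mod p j ^ l)" using m i that(1) by blast
      then have "[m i = 0] (mod p j ^ l)" using that(2) by (simp add: eq_commute[of i j])
      then show ?thesis by (simp add: cong_0_iff)
    qed
    have "h [^]\<^bsub>Aut\<^esub> m i \<in> GL_factor A Ai r i"
      by (rule GL_factor_nat_pow[where q = "\<lambda>j. p j ^ l"]) (simp_all add: h i fixed dvd)
    then show ?thesis using i by blast
  qed
  have "h [^]\<^bsub>Aut\<^esub> (\<Sum>i<r. m i) = h [^]\<^bsub>Aut\<^esub> (1::nat)"
  proof (rule nat_pow_eq_if_cong[where q = "\<lambda>j. p j ^ l", OF h fixed])
    fix j assume j: "j < r"
    have "[(\<Sum>i<r. m i) = (\<Sum>i<r. if i = j then 1 else 0)] (mod p j ^ l)"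
      using m j by (intro cong_sum) auto
    then show "[(\<Sum>i<r. m i) = 1] (mod p j ^ l)" using j by simp
  qed
  then show ?thesis using Aut.nat_pow_sum_mem_generate[where n = r and m = m, OF hA part] hA by simp
qed

lemma GL_factor_nat_pow_eq_one:
  assumes k: "k \<in> GL_factor A Ai r i" and fixed: "\<And>x. x \<in> Ai i \<Longrightarrow> (k [^]\<^bsub>Aut\<^esub> (e::nat)) x = x"
  shows "k [^]\<^bsub>Aut\<^esub> e = \<one>\<^bsub>Aut\<^esub>"
proof -
  have ka: "k \<in> auto A" using k unfolding GL_factor_def by blast
  show ?thesis
  proof (rule auto_eq_if_eq_on_Ai[OF AutoGroup_nat_pow_closed[OF ka]])
    show "\<one>\<^bsub>Aut\<^esub> \<in> auto A" using Aut.one_closed carrier_AutoGroup by simp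
    fix j x assume j: "j < r" and x: "x \<in> Ai j"
    have xG: "x \<in> carrier A" using x Ai_subset_carrier j by blast
    show "(k [^]\<^bsub>Aut\<^esub> e) x = \<one>\<^bsub>Aut\<^esub> x"
    proof (cases "j = i")
      case True
      then show ?thesis using fixed x xG by (simp add: one_AutoGroup)
    next
      case False
      then have "k x = x" using k j x unfolding GL_factor_def by blast
      then show ?thesis using AutoGroup_nat_pow_apply_fixed[OF ka xG] xG by (simp add: one_AutoGroup)
    qed
  qed
qed

lemma normal_Int_GL_factor_subset_O_p:
  assumes U: "subgroup U Aut" and H: "H \<lhd> Aut\<lparr>carrier := U\<rparr>" and i: "i < r"
    and fixed: "\<And>h x. h \<in> H \<Longrightarrow> x \<in> Ai i \<Longrightarrow> (h [^]\<^bsub>Aut\<^esub> (p i ^ l)) x = x"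
  shows "H \<inter> GL_factor A Ai r i \<subseteq> O_p (Aut\<lparr>carrier := sigma A Ai r U i\<rparr>) (p i)"
proof -
  let ?K = "H \<inter> GL_factor A Ai r i"
  have sgH: "subgroup H Aut" using Aut.incl_subgroup[OF U normal_imp_subgroup[OF H]] .
  have pi: "Factorial_Ring.prime (p i)" using primes i by blast
  have N: "?K \<lhd> Aut\<lparr>carrier := sigma A Ai r U i\<rparr>"
    unfolding sigma_def using Aut.normal_inter[OF U GL_factor_subgroup H] .
  have sgK: "subgroup ?K Aut" using Aut.subgroups_Inter_pair[OF sgH GL_factor_subgroup] .
  interpret K: group "Aut\<lparr>carrier := ?K\<rparr>" using Aut.subgroup_imp_group[OF sgK] .
  have finK: "finite (carrier (Aut\<lparr>carrier := ?K\<rparr>))"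
    using finite_auto[OF finite_carrier] unfolding GL_factor_def by (auto intro: finite_subset)
  have "\<exists>e. k [^]\<^bsub>Aut\<lparr>carrier := ?K\<rparr>\<^esub> (p i ^ e) = \<one>\<^bsub>Aut\<lparr>carrier := ?K\<rparr>\<^esub>"
    if "k \<in> carrier (Aut\<lparr>carrier := ?K\<rparr>)" for k
  proof -
    have "k \<in> H" "k \<in> GL_factor A Ai r i" using that by auto
    then have "k [^]\<^bsub>Aut\<^esub> (p i ^ l) = \<one>\<^bsub>Aut\<^esub>" using GL_factor_nat_pow_eq_one fixed by blast
    then show ?thesis using Aut.nat_pow_consistent by auto
  qed
  then obtain e where "order (Aut\<lparr>carrier := ?K\<rparr>) = p i ^ e"
    using K.prime_power_order_if_prime_power_exponents[OF finK pi] by blast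
  then have "card ?K = p i ^ e" by (simp add: order_def)
  then show ?thesis
    using group.O_p_greatest[OF Aut.subgroup_imp_group[OF sigma_subgroup[OF U]] _ pi N] finite_sigma by auto
qed

lemma normal_centralizing_subset_O_U:
  assumes U: "subgroup U Aut" and H: "H \<lhd> Aut\<lparr>carrier := U\<rparr>" and cs: "centralizes_series A H"
  shows "H \<subseteq> O_U A Ai p r U"
proof -
  have sgH: "subgroup H Aut" using Aut.incl_subgroup[OF U normal_imp_subgroup[OF H]] .
  have HU: "H \<subseteq> U" using subgroup.subset[OF normal_imp_subgroup[OF H]] by simp
  then have Ha: "H \<subseteq> auto A" using U subgroup.subset carrier_AutoGroup by blast
  obtain l S where S: "is_series A l S" "H \<subseteq> series_stabilizer A l S"
    using stabilized_series_if_centralizes_series[OF cs Ha] by blast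
  have fixed: "(h [^]\<^bsub>Aut\<^esub> (p j ^ l)) x = x" if "h \<in> H" "j < r" "x \<in> Ai j" for h j x
    using series_stabilizer_pow_fixes_Ai[OF S(1)] S(2) that by blast
  have K_sub: "H \<inter> GL_factor A Ai r i \<subseteq> O_p (Aut\<lparr>carrier := sigma A Ai r U i\<rparr>) (p i)"
    if "i < r" for i using fixed that by (intro normal_Int_GL_factor_subset_O_p[OF U H that]) blast
  show ?thesis
  proof
    fix h assume h: "h \<in> H"
    then have "h \<in> generate Aut (\<Union>i<r. {h [^]\<^bsub>Aut\<^esub> (n::nat) | n. h [^]\<^bsub>Aut\<^esub> n \<in> GL_factor A Ai r i})"
      using mem_generate_GL_factor_powers Ha fixed by blast
    also have "\<dots> \<subseteq> generate Aut (\<Union>i<r. O_p (Aut\<lparr>carrier := sigma A Ai r U i\<rparr>) (p i))"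
      using K_sub Aut.subgroup_nat_pow_closed[OF sgH h] by (intro Aut.mono_generate) blast
    finally show "h \<in> O_U A Ai p r U" unfolding O_U_def .
  qed
qed

lemma O_p_sigma_normal:
  assumes U: "subgroup U Aut" and i: "i < r"
  shows "O_p (Aut\<lparr>carrier := sigma A Ai r U i\<rparr>) (p i) \<lhd> Aut\<lparr>carrier := sigma A Ai r U i\<rparr>"
  using group.O_p_normal[OF Aut.subgroup_imp_group[OF sigma_subgroup[OF U]]] finite_sigma primes i
  by simp

lemma O_p_sigma_subset:
  assumes U: "subgroup U Aut" and i: "i < r"
  shows "O_p (Aut\<lparr>carrier := sigma A Ai r U i\<rparr>) (p i) \<subseteq> sigma A Ai r U i"
  using subgroup.subset[OF normal_imp_subgroup[OF O_p_sigma_normal[OF U i]]] by simp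

lemma O_p_sigma_subgroup:
  assumes U: "subgroup U Aut" and i: "i < r"
  shows "subgroup (O_p (Aut\<lparr>carrier := sigma A Ai r U i\<rparr>) (p i)) Aut"
  using Aut.incl_subgroup[OF sigma_subgroup[OF U] normal_imp_subgroup[OF O_p_sigma_normal[OF U i]]] .

lemma O_p_sigma_prime_power_card:
  assumes U: "subgroup U Aut" and i: "i < r"
  shows "\<exists>k. card (O_p (Aut\<lparr>carrier := sigma A Ai r U i\<rparr>) (p i)) = p i ^ k"
  using group.O_p_prime_power_card[OF Aut.subgroup_imp_group[OF sigma_subgroup[OF U]]] finite_sigma primes i
  by simp

lemma O_U_normal:
  assumes U: "subgroup U Aut"
  shows "O_U A Ai p r U \<lhd> Aut\<lparr>carrier := U\<rparr>"
proof -
  let ?O = "\<lambda>i. O_p (Aut\<lparr>carrier := sigma A Ai r U i\<rparr>) (p i)"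
  have sub: "(\<Union>i<r. ?O i) \<subseteq> U" using O_p_sigma_subset[OF U] unfolding sigma_def by blast
  have "u \<otimes>\<^bsub>Aut\<^esub> x \<otimes>\<^bsub>Aut\<^esub> inv\<^bsub>Aut\<^esub> u \<in> (\<Union>i<r. ?O i)" if u: "u \<in> U" and x: "x \<in> (\<Union>i<r. ?O i)" for u x
  proof -
    obtain i where i: "i < r" "x \<in> ?O i" using x by blast
    have uA: "u \<in> carrier Aut" using u U subgroup.subset by blast
    then have ua: "u \<in> auto A" "inv\<^bsub>Aut\<^esub> u \<in> auto A" using carrier_AutoGroup by auto
    have iu: "inv\<^bsub>Aut\<^esub> u \<in> U" using subgroup.m_inv_closed[OF U u] .
    have "u \<otimes>\<^bsub>Aut\<^esub> s \<otimes>\<^bsub>Aut\<^esub> inv\<^bsub>Aut\<^esub> u \<in> sigma A Ai r U i" if "s \<in> sigma A Ai r U i" for s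
      using that u iu subgroup.m_closed[OF U] GL_factor_conj_closed[OF ua(1)] unfolding sigma_def by blast
    moreover have "inv\<^bsub>Aut\<^esub> u \<otimes>\<^bsub>Aut\<^esub> s \<otimes>\<^bsub>Aut\<^esub> u \<in> sigma A Ai r U i" if "s \<in> sigma A Ai r U i" for s
      using that u iu subgroup.m_closed[OF U] GL_factor_conj_closed[OF ua(2)] Aut.inv_inv[OF uA]
      unfolding sigma_def by fastforce
    ultimately have "u \<otimes>\<^bsub>Aut\<^esub> x \<otimes>\<^bsub>Aut\<^esub> inv\<^bsub>Aut\<^esub> u \<in> ?O i"
      using Aut.O_p_conj_closed[OF sigma_subgroup[OF U] finite_sigma _ uA _ _ i(2)] primes i(1) by blast
    then show ?thesis using i(1) by blast
  qed
  then show ?thesis unfolding O_U_def using Aut.generate_normal_if_conj_closed[OF U sub] by blast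
qed

context
  fixes P :: "nat \<Rightarrow> ('a \<Rightarrow> 'a) set"
  assumes P_subgroup: "\<And>j. j < r \<Longrightarrow> subgroup (P j) Aut"
    and P_GL_factor: "\<And>j. j < r \<Longrightarrow> P j \<subseteq> GL_factor A Ai r j"
    and P_card: "\<And>j. j < r \<Longrightarrow> \<exists>n. card (P j) = p j ^ n"
begin

definition product_series :: "nat \<Rightarrow> 'a set" where
  "product_series k = (\<lambda>f. finprod A f {..<r}) ` (\<Pi>\<^sub>E j\<in>{..<r}. upper_central_series A (P j) (Ai j) k)"

lemma P_auto: "j < r \<Longrightarrow> P j \<subseteq> auto A"
  using P_GL_factor unfolding GL_factor_def by blast

lemma upper_central_series_Ai_subgroup: "j < r \<Longrightarrow> subgroup (upper_central_series A (P j) (Ai j) k) A"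
  using upper_central_series_subgroup P_auto Ai_sub by blast

lemma upper_central_series_Ai_subset: "j < r \<Longrightarrow> upper_central_series A (P j) (Ai j) k \<subseteq> Ai j"
  using upper_central_series_subset Ai_sub by blast

lemma product_series_funcset:
  "f \<in> (\<Pi>\<^sub>E j\<in>{..<r}. upper_central_series A (P j) (Ai j) k) \<Longrightarrow> f \<in> {..<r} \<rightarrow> carrier A"
  using upper_central_series_Ai_subset Ai_subset_carrier by (fastforce simp: PiE_def Pi_def)

lemma product_series_subgroup: "subgroup (product_series k) A"
  unfolding product_series_def
  by (rule subgroup_finprod_PiE) (simp add: upper_central_series_Ai_subgroup)

lemma product_series_0: "product_series 0 = {\<one>}"
proof -
  have "(\<Pi>\<^sub>E j\<in>{..<r}. upper_central_series A (P j) (Ai j) 0) = {\<lambda>j\<in>{..<r}. \<one>}"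
    by (auto simp: PiE_def extensional_def)
  moreover have "finprod A (\<lambda>j\<in>{..<r}. \<one>) {..<r} = \<one>" by (rule finprod_one_eqI) simp
  ultimately show ?thesis unfolding product_series_def by simp
qed

lemma product_series_eq_carrier:
  assumes k: "card (carrier A) \<le> k"
  shows "product_series k = carrier A"
proof -
  have "upper_central_series A (P j) (Ai j) k = Ai j" if j: "j < r" for j
  proof -
    obtain n where n: "card (P j) = p j ^ n" using P_card j by blast
    have kj: "card (Ai j) \<le> k" using card_mono[OF finite_carrier Ai_subset_carrier[OF j]] k by simp
    have maps: "g ` Ai j \<subseteq> Ai j" if "g \<in> P j" for g using auto_maps_Ai P_auto j that by blast
    have "Factorial_Ring.prime (p j)" "subgroup (Ai j) A" "card (Ai j) = p j ^ d j"
      using primes Ai_sub Ai_card j by simp_all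
    then show ?thesis using upper_central_series_eq[OF _ P_subgroup[OF j] n _ _ maps kj] by blast
  qed
  then have "(\<Pi>\<^sub>E j\<in>{..<r}. upper_central_series A (P j) (Ai j) k) = (\<Pi>\<^sub>E j\<in>{..<r}. Ai j)"
    by (intro PiE_cong) auto
  then show ?thesis unfolding product_series_def using bij_betw_imp_surj_on[OF dirprod] by simp
qed

lemma product_series_mono: "product_series k \<subseteq> product_series (Suc k)"
proof -
  have "(\<Pi>\<^sub>E j\<in>{..<r}. upper_central_series A (P j) (Ai j) k)
          \<subseteq> (\<Pi>\<^sub>E j\<in>{..<r}. upper_central_series A (P j) (Ai j) (Suc k))"
    using upper_central_series_mono[OF P_auto Ai_sub[rule_format]] by (intro PiE_mono) blast
  then show ?thesis unfolding product_series_def by blast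
qed

lemma P_fixes_other_Ai: "i < r \<Longrightarrow> g \<in> P i \<Longrightarrow> j < r \<Longrightarrow> j \<noteq> i \<Longrightarrow> x \<in> Ai j \<Longrightarrow> g x = x"
  using P_GL_factor unfolding GL_factor_def by blast

lemma product_series_invariant:
  assumes i: "i < r" and g: "g \<in> P i" and x: "x \<in> product_series k"
  shows "g x \<in> product_series k"
proof -
  obtain f where f: "f \<in> (\<Pi>\<^sub>E j\<in>{..<r}. upper_central_series A (P j) (Ai j) k)" "x = finprod A f {..<r}"
    using x unfolding product_series_def by blast
  have "(\<lambda>j\<in>{..<r}. g (f j)) \<in> (\<Pi>\<^sub>E j\<in>{..<r}. upper_central_series A (P j) (Ai j) k)"
  proof (rule PiE_I)
    fix j assume j: "j \<in> {..<r}"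
    have fj: "f j \<in> upper_central_series A (P j) (Ai j) k" using f(1) j by blast
    show "(\<lambda>j\<in>{..<r}. g (f j)) j \<in> upper_central_series A (P j) (Ai j) k"
    proof (cases "j = i")
      case True
      then show ?thesis
        using upper_central_series_invariant[OF P_subgroup Ai_sub[rule_format] _ g] auto_maps_Ai P_auto
          fj i by fastforce
    next
      case False
      then have "g (f j) = f j"
        using P_fixes_other_Ai[OF i g] j fj upper_central_series_Ai_subset by blast
      then show ?thesis using fj j by simp
    qed
  qed simp
  then show ?thesis
    unfolding product_series_def f(2) auto_apply_finprod[OF P_auto[OF i, THEN subsetD, OF g] product_series_funcset[OF f(1)]] by blast
qed

lemma product_series_commutator:
  assumes i: "i < r" and g: "g \<in> P i" and x: "x \<in> product_series (Suc k)"
  shows "g x \<otimes> inv x \<in> product_series k"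
proof -
  obtain f where f: "f \<in> (\<Pi>\<^sub>E j\<in>{..<r}. upper_central_series A (P j) (Ai j) (Suc k))" "x = finprod A f {..<r}"
    using x unfolding product_series_def by blast
  have fG: "f \<in> {..<r} \<rightarrow> carrier A" using product_series_funcset[OF f(1)] .
  have ga: "g \<in> auto A" using P_auto i g by blast
  have gfG: "(\<lambda>j. g (f j)) \<in> {..<r} \<rightarrow> carrier A" and ifG: "(\<lambda>j. inv (f j)) \<in> {..<r} \<rightarrow> carrier A"
    using fG auto_closed[OF ga] by auto
  have "g \<in> hom A A" using ga by (simp add: auto_def)
  then have "g x \<otimes> inv x = finprod A (\<lambda>j. g (f j)) {..<r} \<otimes> finprod A (\<lambda>j. inv (f j)) {..<r}"
    using hom_finprod[OF _ fG] inv_hom f(2) by simp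
  also have "\<dots> = finprod A (\<lambda>j. g (f j) \<otimes> inv (f j)) {..<r}"
    using finprod_multf[OF gfG ifG] by simp
  also have "\<dots> = finprod A (\<lambda>j\<in>{..<r}. g (f j) \<otimes> inv (f j)) {..<r}"
    by (rule finprod_cong') (use gfG ifG in auto)
  finally have prod: "g x \<otimes> inv x = finprod A (\<lambda>j\<in>{..<r}. g (f j) \<otimes> inv (f j)) {..<r}" .
  have "(\<lambda>j\<in>{..<r}. g (f j) \<otimes> inv (f j)) \<in> (\<Pi>\<^sub>E j\<in>{..<r}. upper_central_series A (P j) (Ai j) k)"
  proof (rule PiE_I)
    fix j assume j: "j \<in> {..<r}"
    have fj: "f j \<in> upper_central_series A (P j) (Ai j) (Suc k)" using f(1) j by blast
    show "(\<lambda>j\<in>{..<r}. g (f j) \<otimes> inv (f j)) j \<in> upper_central_series A (P j) (Ai j) k"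
    proof (cases "j = i")
      case True
      then show ?thesis using fj g j by simp
    next
      case False
      then have "g (f j) = f j" "f j \<in> carrier A"
        using P_fixes_other_Ai[OF i g] j fj upper_central_series_Ai_subset Ai_subset_carrier by blast+
      then show ?thesis
        using j subgroup.one_closed[OF upper_central_series_Ai_subgroup] by simp
    qed
  qed simp
  then show ?thesis unfolding product_series_def prod by blast
qed

lemma centralizes_series_generate:
  "centralizes_series A (generate Aut (\<Union>j<r. P j))"
proof -
  define L where "L = card (carrier A)"
  define S where "S = (\<lambda>j. product_series (L - j))"
  have sg: "subgroup (S j) A" for j unfolding S_def by (rule product_series_subgroup)
  have series: "is_series A L S"
    unfolding is_series_def
  proof (intro conjI allI impI)
    show "S 0 = carrier A" unfolding S_def L_def using product_series_eq_carrier by simp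
    show "S L = {\<one>}" unfolding S_def using product_series_0 by simp
    show "subgroup (S j) A" for j by (rule sg)
    show "S (Suc j) \<subseteq> S j" if "j < L" for j
      using product_series_mono[of "L - Suc j"] that unfolding S_def by (simp add: Suc_diff_Suc)
  qed
  have "(\<Union>j<r. P j) \<subseteq> series_stabilizer A L S"
  proof
    fix g assume "g \<in> (\<Union>j<r. P j)"
    then obtain i where i: "i < r" and g: "g \<in> P i" by blast
    show "g \<in> series_stabilizer A L S"
      unfolding series_stabilizer_def
    proof (intro CollectI conjI allI impI ballI)
      show "g \<in> auto A" using P_auto i g by blast
      show "g ` S j \<subseteq> S j" for j unfolding S_def using product_series_invariant[OF i g] by blast
      fix j x assume j: "j < L" and "x \<in> S j"
      then have "x \<in> product_series (Suc (L - Suc j))" unfolding S_def by (simp add: Suc_diff_Suc)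
      then show "g x \<otimes> inv x \<in> S (Suc j)" unfolding S_def using product_series_commutator[OF i g] by blast
    qed
  qed
  then have "generate Aut (\<Union>j<r. P j) \<subseteq> series_stabilizer A L S"
    using series_stabilizer_subgroup[OF finite_carrier sg] by (rule Aut.generate_subgroup_incl)
  then show ?thesis by (rule centralizes_series_if_stabilized[OF series])
qed

end

end

theorem lemma3p3:
  fixes A :: "('a, 'b) monoid_scheme"
    and Ai :: "nat \<Rightarrow> 'a set"
    and p d :: "nat \<Rightarrow> nat"
    and r :: nat
    and U :: "('a \<Rightarrow> 'a) set"
  assumes A_comm: "comm_group A"
    and primes: "\<forall>i<r. Factorial_Ring.prime (p i)"
    and distinct: "inj_on p {..<r}"
    and d_pos: "\<forall>i<r. d i \<ge> 1"
    and Ai_sub: "\<forall>i<r. subgroup (Ai i) A"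
    and Ai_card: "\<forall>i<r. card (Ai i) = p i ^ d i"
    and Ai_elem: "\<forall>i<r. \<forall>x\<in>Ai i. x [^]\<^bsub>A\<^esub> p i = \<one>\<^bsub>A\<^esub>"
    and dirprod: "bij_betw (\<lambda>x. finprod A x {..<r}) (\<Pi>\<^sub>E i\<in>{..<r}. Ai i) (carrier A)"
    and U_sub: "subgroup U (AutoGroup A)"
  shows "normal (O_U A Ai p r U) ((AutoGroup A)\<lparr>carrier := U\<rparr>)
         \<and> centralizes_series A (O_U A Ai p r U)
         \<and> (\<forall>H. normal H ((AutoGroup A)\<lparr>carrier := U\<rparr>) \<and> centralizes_series A H
                 \<longrightarrow> H \<subseteq> O_U A Ai p r U)
         \<and> (F_relevant A U \<longleftrightarrow> O_U A Ai p r U = {\<one>\<^bsub>AutoGroup A\<^esub>})"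
proof -
  interpret elementary_abelian_decomposition A Ai p d r
    using A_comm primes distinct Ai_sub Ai_card Ai_elem dirprod
    unfolding elementary_abelian_decomposition_def elementary_abelian_decomposition_axioms_def by blast
  have normal: "O_U A Ai p r U \<lhd> (AutoGroup A)\<lparr>carrier := U\<rparr>" by (rule O_U_normal[OF U_sub])
  have central: "centralizes_series A (O_U A Ai p r U)"
    unfolding O_U_def
    by (rule centralizes_series_generate)
      (use O_p_sigma_subgroup[OF U_sub] O_p_sigma_subset[OF U_sub] O_p_sigma_prime_power_card[OF U_sub]
        in \<open>auto simp: sigma_def\<close>)
  have greatest: "H \<subseteq> O_U A Ai p r U"
    if "H \<lhd> (AutoGroup A)\<lparr>carrier := U\<rparr>" "centralizes_series A H" for H
    using normal_centralizing_subset_O_U[OF U_sub that] .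
  show ?thesis using normal central greatest F_relevant_iff_eq_one[OF normal central greatest] by blast
qed

end
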